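(* Let $R=k\{x_1,\ldots,x_n;\,Q,\preceq\}$ be a PBW algebra, $M\subseteq R^s$ an $R$-subbimodule, and give $R^{\rm env}$ its PBW structure with one of the orders $\preceq^*$, $\preceq^c$, $\preceq_*$, $\preceq_c$ on $\mathbb{N}^{2n}$. If $G$ is a left Gröbner basis of the left $R^{\rm env}$-module $N_M=(\mathfrak m^s)^{-1}(M)\subseteq(R^{\rm env})^s$ with respect to TOP (resp. POT), then $\mathfrak m^s(G)\setminus\{0\}$ is a two-sided Gröbner basis of $M$ with respect to TOP (resp. POT) built from $\preceq$.
   Context: $k$ is a field; $x^\alpha=x_1^{\alpha_1}\cdots x_n^{\alpha_n}$. A PBW algebra $R=k\{x_1,\ldots,x_n;Q,\preceq\}$ is a quotient of $k\langle x_1,\ldots,x_n\rangle$ by the two-sided ideal generated by $Q=\{x_jx_i-q_{ji}x_ix_j-p_{ji};\,i<j\}$, $q_{ji}\in k^*$, each $p_{ji}$ a combination of standard monomials with exponents $\prec\epsilon_i+\epsilon_j$ for an admissible order $\preceq$ (total, compatible with addition, $0$ minimal), such that the standard monomials form a $k$-basis. $R^{\rm env}=R\otimes_kR^{\rm op}$ is the PBW algebra in the variables $x_1\otimes1,\ldots,x_n\otimes1,1\otimes x_n,\ldots,1\otimes x_1$ (in this order) with relations $(x_j\otimes1)(x_i\otimes1)-q_{ji}(x_i\otimes1)(x_j\otimes1)-p_{ji}\otimes1$, $(1\otimes x_j)(x_i\otimes1)-(x_i\otimes1)(1\otimes x_j)$, $(1\otimes x_i)(1\otimes x_j)-q_{ji}(1\otimes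 x_j)(1\otimes x_i)-1\otimes p_{ji}$; exponent $(\alpha,\beta)\in\mathbb N^{2n}$ corresponds to $x^\alpha\otimes x^{\beta^{\rm op}}$, $\beta^{\rm op}=(\beta_n,\ldots,\beta_1)$. With $\alpha\preceq^{\rm op}\beta$ iff $\alpha^{\rm op}\preceq\beta^{\rm op}$: $(\alpha,\beta)\prec^*(\gamma,\delta)$ iff $\beta\prec^{\rm op}\delta$ or ($\beta=\delta$, $\alpha\prec\gamma$); $(\alpha,\beta)\prec_*(\gamma,\delta)$ iff $\alpha\prec\gamma$ or ($\alpha=\gamma$, $\beta\prec^{\rm op}\delta$); $(\alpha,\beta)\prec^c(\gamma,\delta)$ iff $\alpha+\beta^{\rm op}\prec\gamma+\delta^{\rm op}$ or (equality and $\beta^{\rm op}\prec\delta^{\rm op}$); $(\alpha,\beta)\prec_c(\gamma,\delta)$ iff $\alpha+\beta^{\rm op}\prec\gamma+\delta^{\rm op}$ or (equality and $\alpha\prec\gamma$). For an admissible order $\le$ on $\mathbb N^m$, on $\mathbb N^{m,(s)}=\mathbb N^m\times\{1,\ldots,s\}$ TOP is: $(\alpha,i)<(\beta,j)$ iff $\alpha<\beta$, or $\alpha=\beta$ and $i>j$; POT is: $(\alpha,i)<(\beta,j)$ iff $i>j$, or $i=j$ and $\alpha<\beta$. For $A=R$ or $R^{\rm env}$ with standard basis $\mathbf e_i$ of $A^s$, a nonzero $\mathbf f=\sum c_{(\alpha,i)}x^\alpha\mathbf e_i$ has $\exp(\mathbf f)$ the largest $(\alpha,i)$ with nonzero coefficient;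 for $L\subseteq A^s$, $\mathrm{Exp}(L)=\{\exp(\mathbf f):0\ne\mathbf f\in L\}$; $(\alpha,i)+\mathbb N^m:=\{(\alpha+\gamma,i):\gamma\in\mathbb N^m\}$. A finite $G\subseteq L\setminus\{0\}$ is a left Gröbner basis of a left submodule $L\subseteq A^s$ if $L={}_A\langle G\rangle$ and $\mathrm{Exp}(L)=\bigcup_{\mathbf g\in G}(\exp(\mathbf g)+\mathbb N^m)$. A finite $G\subseteq M\setminus\{0\}$ is a two-sided Gröbner basis of an $R$-subbimodule $M\subseteq R^s$ if $M={}_R\langle G\rangle_R$ (sub-bimodule generated) and $\mathrm{Exp}(M)=\bigcup_{\mathbf g\in G}(\exp(\mathbf g)+\mathbb N^n)$. $R^s$ is a left $R^{\rm env}$-module via $(r\otimes r')\mathbf f=(rf_1r',\ldots,rf_sr')$; $\mathfrak m^s:(R^{\rm env})^s\to R^s$ applies $\mathfrak m(r\otimes r')=rr'$ coordinatewise. *)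

theory Defs
  imports Main
begin

(* Exponents in N^n are lists of length n (index 0 .. n-1 plays the role of 1 .. n). *)
definition Ex :: "nat \<Rightarrow> nat list set" where
  "Ex n = {\<alpha>. length \<alpha> = n}"

definition addE :: "nat list \<Rightarrow> nat list \<Rightarrow> nat list" where
  "addE \<alpha> \<beta> = map2 (+) \<alpha> \<beta>"

definition eps :: "nat \<Rightarrow> nat \<Rightarrow> nat list" where
  "eps n i = (replicate n 0)[i := 1]"

definition admissible :: "nat \<Rightarrow> (nat list \<Rightarrow> nat list \<Rightarrow> bool) \<Rightarrow> bool" where
  "admissible n le \<longleftrightarrow>
     (\<forall>\<alpha>\<in>Ex n. le \<alpha> \<alpha>) \<and>
     (\<forall>\<alpha>\<in>Ex n. \<forall>\<beta>\<in>Ex n. le \<alpha> \<beta> \<and> le \<beta> \<alpha> \<longrightarrow> \<alpha> = \<beta>) \<and>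
     (\<forall>\<alpha>\<in>Ex n. \<forall>\<beta>\<in>Ex n. \<forall>\<gamma>\<in>Ex n. le \<alpha> \<beta> \<and> le \<beta> \<gamma> \<longrightarrow> le \<alpha> \<gamma>) \<and>
     (\<forall>\<alpha>\<in>Ex n. \<forall>\<beta>\<in>Ex n. le \<alpha> \<beta> \<or> le \<beta> \<alpha>) \<and>
     (\<forall>\<alpha>\<in>Ex n. \<forall>\<beta>\<in>Ex n. \<forall>\<gamma>\<in>Ex n. le \<alpha> \<beta> \<longrightarrow> le (addE \<alpha> \<gamma>) (addE \<beta> \<gamma>)) \<and>
     (\<forall>\<alpha>\<in>Ex n. le (replicate n 0) \<alpha>)"

definition strict :: "('e \<Rightarrow> 'e \<Rightarrow> bool) \<Rightarrow> 'e \<Rightarrow> 'e \<Rightarrow> bool" where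
  "strict le a b \<longleftrightarrow> le a b \<and> a \<noteq> b"

definition k_algebra :: "('k::field \<Rightarrow> 'r::ring_1) \<Rightarrow> bool" where
  "k_algebra sc \<longleftrightarrow> sc 1 = 1 \<and> (\<forall>a b. sc (a + b) = sc a + sc b) \<and>
     (\<forall>a b. sc (a * b) = sc a * sc b) \<and> (\<forall>a r. sc a * r = r * sc a)"

definition mon :: "(nat \<Rightarrow> 'r::ring_1) \<Rightarrow> nat \<Rightarrow> nat list \<Rightarrow> 'r" where
  "mon x n \<alpha> = prod_list (map (\<lambda>i. x i ^ (\<alpha> ! i)) [0..<n])"

definition fsupp :: "nat \<Rightarrow> (nat list \<Rightarrow> 'k::zero) \<Rightarrow> bool" where
  "fsupp n c \<longleftrightarrow> finite {\<alpha>. c \<alpha> \<noteq> 0} \<and> (\<forall>\<alpha>. c \<alpha> \<noteq> 0 \<longrightarrow> length \<alpha> = n)"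

definition lin :: "('k::field \<Rightarrow> 'r::ring_1) \<Rightarrow> (nat \<Rightarrow> 'r) \<Rightarrow> nat \<Rightarrow> (nat list \<Rightarrow> 'k) \<Rightarrow> 'r" where
  "lin sc x n c = (\<Sum>\<alpha>\<in>{\<alpha>. c \<alpha> \<noteq> 0}. sc (c \<alpha>) * mon x n \<alpha>)"

(* R is the PBW algebra k{x_1,...,x_n; Q, le}: generated by x with relations Q,
   standard monomials forming a k-basis *)
definition pbw :: "('k::field \<Rightarrow> 'r::ring_1) \<Rightarrow> (nat \<Rightarrow> 'r) \<Rightarrow> nat \<Rightarrow>
                   (nat list \<Rightarrow> nat list \<Rightarrow> bool) \<Rightarrow> bool" where
  "pbw sc x n le \<longleftrightarrow>
     k_algebra sc \<and> admissible n le \<and>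
     (\<forall>i j. i < j \<and> j < n \<longrightarrow>
        (\<exists>q p. q \<noteq> 0 \<and> fsupp n p \<and>
           (\<forall>\<alpha>. p \<alpha> \<noteq> 0 \<longrightarrow> strict le \<alpha> (addE (eps n i) (eps n j))) \<and>
           x j * x i = sc q * x i * x j + lin sc x n p)) \<and>
     (\<forall>r. \<exists>!c. fsupp n c \<and> r = lin sc x n c)"

definition cf :: "('k::field \<Rightarrow> 'r::ring_1) \<Rightarrow> (nat \<Rightarrow> 'r) \<Rightarrow> nat \<Rightarrow> 'r \<Rightarrow> nat list \<Rightarrow> 'k" where
  "cf sc x n r = (THE c. fsupp n c \<and> r = lin sc x n c)"

(* TOP and POT orders on N^{m,(s)} (strict versions); components indexed from 0 *)
definition TOP :: "('e \<Rightarrow> 'e \<Rightarrow> bool) \<Rightarrow> ('e \<times> nat) \<Rightarrow> ('e \<times> nat) \<Rightarrow> bool" where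
  "TOP lt a b \<longleftrightarrow> lt (fst a) (fst b) \<or> (fst a = fst b \<and> snd a > snd b)"

definition POT :: "('e \<Rightarrow> 'e \<Rightarrow> bool) \<Rightarrow> ('e \<times> nat) \<Rightarrow> ('e \<times> nat) \<Rightarrow> bool" where
  "POT lt a b \<longleftrightarrow> snd a > snd b \<or> (snd a = snd b \<and> lt (fst a) (fst b))"

definition modord :: "bool \<Rightarrow> ('e \<Rightarrow> 'e \<Rightarrow> bool) \<Rightarrow> ('e \<times> nat) \<Rightarrow> ('e \<times> nat) \<Rightarrow> bool" where
  "modord istop lt = (if istop then TOP lt else POT lt)"

definition supp_vec :: "('v \<Rightarrow> 'e \<Rightarrow> 'k::zero) \<Rightarrow> nat \<Rightarrow> (nat \<Rightarrow> 'v) \<Rightarrow> ('e \<times> nat) set" where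
  "supp_vec coef s f = {(e, i). i < s \<and> coef (f i) e \<noteq> 0}"

definition lead :: "('a \<Rightarrow> 'a \<Rightarrow> bool) \<Rightarrow> 'a set \<Rightarrow> 'a" where
  "lead lt S = (THE e. e \<in> S \<and> (\<forall>e'\<in>S. e' \<noteq> e \<longrightarrow> lt e' e))"

definition expv :: "('v \<Rightarrow> 'e \<Rightarrow> 'k::zero) \<Rightarrow> ('e \<times> nat \<Rightarrow> 'e \<times> nat \<Rightarrow> bool) \<Rightarrow> nat \<Rightarrow>
                    (nat \<Rightarrow> 'v) \<Rightarrow> 'e \<times> nat" where
  "expv coef lt s f = lead lt (supp_vec coef s f)"

definition ExpSet :: "('v \<Rightarrow> 'e \<Rightarrow> 'k::zero) \<Rightarrow> ('e \<times> nat \<Rightarrow> 'e \<times> nat \<Rightarrow> bool) \<Rightarrow> nat \<Rightarrow>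
                      (nat \<Rightarrow> 'v) \<Rightarrow> (nat \<Rightarrow> 'v) set \<Rightarrow> ('e \<times> nat) set" where
  "ExpSet coef lt s z L = {expv coef lt s f | f. f \<in> L \<and> f \<noteq> z}"

definition cone :: "('e \<Rightarrow> 'e \<Rightarrow> 'e) \<Rightarrow> 'e set \<Rightarrow> 'e \<times> nat \<Rightarrow> ('e \<times> nat) set" where
  "cone add \<Gamma> a = {(add (fst a) \<gamma>, snd a) | \<gamma>. \<gamma> \<in> \<Gamma>}"

definition vecs :: "nat \<Rightarrow> (nat \<Rightarrow> 'r::ring_1) set" where
  "vecs s = {f. \<forall>i\<ge>s. f i = 0}"

definition subbimodule :: "nat \<Rightarrow> (nat \<Rightarrow> 'r::ring_1) set \<Rightarrow> bool" where
  "subbimodule s M \<longleftrightarrow> M \<subseteq> vecs s \<and> (\<lambda>_. 0) \<in> M \<and>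
     (\<forall>f\<in>M. \<forall>g\<in>M. (\<lambda>i. f i + g i) \<in> M) \<and>
     (\<forall>f\<in>M. \<forall>a b. (\<lambda>i. a * f i * b) \<in> M)"

definition bispan :: "(nat \<Rightarrow> 'r::ring_1) set \<Rightarrow> (nat \<Rightarrow> 'r) set" where
  "bispan G = {f. \<exists>ts. (\<forall>t\<in>set ts. fst (snd t) \<in> G) \<and>
                   f = (\<lambda>i. \<Sum>t\<leftarrow>ts. fst t * fst (snd t) i * snd (snd t))}"

definition two_sided_gb :: "('k::field \<Rightarrow> 'r::ring_1) \<Rightarrow> (nat \<Rightarrow> 'r) \<Rightarrow> nat \<Rightarrow> nat \<Rightarrow>
     (nat list \<times> nat \<Rightarrow> nat list \<times> nat \<Rightarrow> bool) \<Rightarrow> (nat \<Rightarrow> 'r) set \<Rightarrow> (nat \<Rightarrow> 'r) set \<Rightarrow> bool" where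
  "two_sided_gb sc x n s lt M G \<longleftrightarrow>
     finite G \<and> G \<subseteq> M - {\<lambda>_. 0} \<and> M = bispan G \<and>
     ExpSet (cf sc x n) lt s (\<lambda>_. 0) M = (\<Union>g\<in>G. cone addE (Ex n) (expv (cf sc x n) lt s g))"

(* ---------- R^env = R \<otimes> R^op ----------
   An element is a finitely supported coefficient function c on N^{2n} = N^n x N^n,
   standing for  sum c(alpha,beta) x^alpha \<otimes> x^(beta^op),  beta^op = rev beta. *)

definition envc :: "nat \<Rightarrow> (nat list \<times> nat list \<Rightarrow> 'k::zero) set" where
  "envc n = {c. finite {p. c p \<noteq> 0} \<and> (\<forall>p. c p \<noteq> 0 \<longrightarrow> length (fst p) = n \<and> length (snd p) = n)}"

definition addE2 :: "nat list \<times> nat list \<Rightarrow> nat list \<times> nat list \<Rightarrow> nat list \<times> nat list" where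
  "addE2 a b = (addE (fst a) (fst b), addE (snd a) (snd b))"

(* product in R \<otimes> R^op: (a \<otimes> b)(c \<otimes> d) = ac \<otimes> db *)
definition env_mult :: "('k::field \<Rightarrow> 'r::ring_1) \<Rightarrow> (nat \<Rightarrow> 'r) \<Rightarrow> nat \<Rightarrow>
     (nat list \<times> nat list \<Rightarrow> 'k) \<Rightarrow> (nat list \<times> nat list \<Rightarrow> 'k) \<Rightarrow> (nat list \<times> nat list \<Rightarrow> 'k)" where
  "env_mult sc x n c d = (\<lambda>(\<mu>, \<nu>). \<Sum>p\<in>{p. c p \<noteq> 0}. \<Sum>q\<in>{q. d q \<noteq> 0}.
      c p * d q * cf sc x n (mon x n (fst p) * mon x n (fst q)) \<mu>
            * cf sc x n (mon x n (rev (snd q)) * mon x n (rev (snd p))) (rev \<nu>))"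

definition envvecs :: "nat \<Rightarrow> nat \<Rightarrow> (nat \<Rightarrow> (nat list \<times> nat list \<Rightarrow> 'k::zero)) set" where
  "envvecs n s = {F. (\<forall>i<s. F i \<in> envc n) \<and> (\<forall>i\<ge>s. F i = (\<lambda>_. 0))}"

definition lspan :: "('k::field \<Rightarrow> 'r::ring_1) \<Rightarrow> (nat \<Rightarrow> 'r) \<Rightarrow> nat \<Rightarrow>
     (nat \<Rightarrow> (nat list \<times> nat list \<Rightarrow> 'k)) set \<Rightarrow> (nat \<Rightarrow> (nat list \<times> nat list \<Rightarrow> 'k)) set" where
  "lspan sc x n G = {F. \<exists>h. (\<forall>g\<in>G. h g \<in> envc n) \<and>
        F = (\<lambda>i p. \<Sum>g\<in>G. env_mult sc x n (h g) (g i) p)}"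

definition menv :: "('k::field \<Rightarrow> 'r::ring_1) \<Rightarrow> (nat \<Rightarrow> 'r) \<Rightarrow> nat \<Rightarrow> (nat list \<times> nat list \<Rightarrow> 'k) \<Rightarrow> 'r" where
  "menv sc x n c = (\<Sum>p\<in>{p. c p \<noteq> 0}. sc (c p) * mon x n (fst p) * mon x n (rev (snd p)))"

definition ms :: "('k::field \<Rightarrow> 'r::ring_1) \<Rightarrow> (nat \<Rightarrow> 'r) \<Rightarrow> nat \<Rightarrow>
     (nat \<Rightarrow> (nat list \<times> nat list \<Rightarrow> 'k)) \<Rightarrow> (nat \<Rightarrow> 'r)" where
  "ms sc x n F = (\<lambda>i. menv sc x n (F i))"

definition NM :: "('k::field \<Rightarrow> 'r::ring_1) \<Rightarrow> (nat \<Rightarrow> 'r) \<Rightarrow> nat \<Rightarrow> nat \<Rightarrow> (nat \<Rightarrow> 'r) set \<Rightarrow>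
     (nat \<Rightarrow> (nat list \<times> nat list \<Rightarrow> 'k)) set" where
  "NM sc x n s M = {F \<in> envvecs n s. ms sc x n F \<in> M}"

definition left_gb :: "('k::field \<Rightarrow> 'r::ring_1) \<Rightarrow> (nat \<Rightarrow> 'r) \<Rightarrow> nat \<Rightarrow> nat \<Rightarrow>
     ((nat list \<times> nat list) \<times> nat \<Rightarrow> (nat list \<times> nat list) \<times> nat \<Rightarrow> bool) \<Rightarrow>
     (nat \<Rightarrow> (nat list \<times> nat list \<Rightarrow> 'k)) set \<Rightarrow> (nat \<Rightarrow> (nat list \<times> nat list \<Rightarrow> 'k)) set \<Rightarrow> bool" where
  "left_gb sc x n s lt L G \<longleftrightarrow>
     finite G \<and> G \<subseteq> L - {\<lambda>_ _. 0} \<and> L = lspan sc x n G \<and>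
     ExpSet (\<lambda>c. c) lt s (\<lambda>_ _. 0) L = (\<Union>g\<in>G. cone addE2 (Ex n \<times> Ex n) (expv (\<lambda>c. c) lt s g))"

(* orders on N^{2n} built from a strict order lt on N^n; lt^op a b = lt (rev a) (rev b) *)
definition ord_star_up :: "(nat list \<Rightarrow> nat list \<Rightarrow> bool) \<Rightarrow> nat list \<times> nat list \<Rightarrow> nat list \<times> nat list \<Rightarrow> bool" where
  "ord_star_up lt a b \<longleftrightarrow> lt (rev (snd a)) (rev (snd b)) \<or> (snd a = snd b \<and> lt (fst a) (fst b))"

definition ord_star_low :: "(nat list \<Rightarrow> nat list \<Rightarrow> bool) \<Rightarrow> nat list \<times> nat list \<Rightarrow> nat list \<times> nat list \<Rightarrow> bool" where
  "ord_star_low lt a b \<longleftrightarrow> lt (fst a) (fst b) \<or> (fst a = fst b \<and> lt (rev (snd a)) (rev (snd b)))"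

definition ord_c_up :: "(nat list \<Rightarrow> nat list \<Rightarrow> bool) \<Rightarrow> nat list \<times> nat list \<Rightarrow> nat list \<times> nat list \<Rightarrow> bool" where
  "ord_c_up lt a b \<longleftrightarrow> lt (addE (fst a) (rev (snd a))) (addE (fst b) (rev (snd b))) \<or>
     (addE (fst a) (rev (snd a)) = addE (fst b) (rev (snd b)) \<and> lt (rev (snd a)) (rev (snd b)))"

definition ord_c_low :: "(nat list \<Rightarrow> nat list \<Rightarrow> bool) \<Rightarrow> nat list \<times> nat list \<Rightarrow> nat list \<times> nat list \<Rightarrow> bool" where
  "ord_c_low lt a b \<longleftrightarrow> lt (addE (fst a) (rev (snd a))) (addE (fst b) (rev (snd b))) \<or>
     (addE (fst a) (rev (snd a)) = addE (fst b) (rev (snd b)) \<and> lt (fst a) (fst b))"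

end

(*
  The multiplication map m sends the basis element x^a \<otimes> x^(b^op) of R^env to
  x^a x^(b^op), all of whose exponents are \<preceq> a + b^op. In a PBW algebra this bound
  follows by well-founded induction along the admissible order (well-founded by
  Dickson's lemma): variables are brought into standard order with the relations
  x_j x_i = q x_i x_j + p, whose correction terms p have strictly smaller exponents.

  Each of the four orders on N^2n comes with an embedding emb of N^n, namely
  e \<mapsto> (e, 0) for the orders \<preceq>^* and \<preceq>^c and e \<mapsto> (0, e^op) for \<preceq>_* and \<preceq>_c,
  which is order preserving and such that every exponent p = (a, b) below emb e has
  a + b^op \<preceq> e, with equality only for p = emb e. Hence m^s maps an element of
  (R^env)^s with leading exponent (emb e, i) to one with leading exponent (e, i).
  Conversely every f in R^s has a lift with m^s (lift f) = f and leading exponent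
  (emb e, i) when f has leading exponent (e, i). So Exp(M) is the preimage of Exp(N_M)
  under emb; the cones of the left Groebner basis G that meet the image of emb pull
  back to the cones of the m^s(g), and m^s maps the left span of G onto the two-sided
  span of m^s(G).
*)

theory Submission
  imports Defs
begin

section \<open>Exponent vectors\<close>

lemma Ex_iff [simp]: "\<alpha> \<in> Ex n \<longleftrightarrow> length \<alpha> = n"
  by (simp add: Ex_def)

lemma length_addE [simp]: "length (addE a b) = min (length a) (length b)"
  by (simp add: addE_def)

lemma nth_addE [simp]: "i < length a \<Longrightarrow> i < length b \<Longrightarrow> addE a b ! i = a ! i + b ! i"
  by (simp add: addE_def)

lemma addE_commute: "addE a b = addE b a"
  by (rule nth_equalityI) auto

lemma addE_assoc: "addE (addE a b) c = addE a (addE b c)"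
  by (rule nth_equalityI) auto

lemma addE_left_commute: "addE a (addE b c) = addE b (addE a c)"
  by (rule nth_equalityI) auto

lemma addE_replicate_0_left [simp]: "length a = n \<Longrightarrow> addE (replicate n 0) a = a"
  by (rule nth_equalityI) auto

lemma addE_replicate_0_right [simp]: "length a = n \<Longrightarrow> addE a (replicate n 0) = a"
  by (rule nth_equalityI) auto

lemma addE_right_cancel:
  assumes "length a = length c" "length b = length c" "addE a c = addE b c"
  shows "a = b"
proof (rule nth_equalityI)
  show "length a = length b" using assms by simp
  show "a ! i = b ! i" if "i < length a" for i
    using arg_cong[OF assms(3), of "\<lambda>l. l ! i"] that assms(1,2) by simp
qed

lemma addE_left_cancel:
  "length a = length c \<Longrightarrow> length b = length c \<Longrightarrow> addE c a = addE c b \<Longrightarrow> a = b"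
  using addE_right_cancel by (metis addE_commute)

lemma addE_eq_replicate_0_iff:
  assumes "length a = n" "length b = n"
  shows "addE a b = replicate n 0 \<longleftrightarrow> a = replicate n 0 \<and> b = replicate n 0"
proof
  assume sum0: "addE a b = replicate n 0"
  have "a ! i = 0 \<and> b ! i = 0" if "i < n" for i
    using arg_cong[OF sum0, of "\<lambda>l. l ! i"] that assms by simp
  then show "a = replicate n 0 \<and> b = replicate n 0"
    using assms by (auto intro: nth_equalityI)
qed (use assms in simp)

lemma rev_addE: "length a = length b \<Longrightarrow> rev (addE a b) = addE (rev a) (rev b)"
  by (rule nth_equalityI) (auto simp: rev_nth)

lemma addE2_Pair [simp]: "addE2 (a, b) (c, d) = (addE a c, addE b d)"
  by (simp add: addE2_def)

lemma length_eps [simp]: "length (eps n i) = n"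
  by (simp add: eps_def)

lemma nth_eps: "k < n \<Longrightarrow> eps n i ! k = (if k = i then 1 else 0)"
  by (simp add: eps_def nth_list_update)

lemma addE_eps: "length \<delta> = n \<Longrightarrow> i < n \<Longrightarrow> addE \<delta> (eps n i) = \<delta>[i := Suc (\<delta> ! i)]"
  by (rule nth_equalityI) (auto simp: nth_eps nth_list_update)

section \<open>Dickson's lemma and admissible orders\<close>

lemma nat_seq_monotone_subseq:
  fixes s :: "nat \<Rightarrow> nat"
  obtains \<phi> :: "nat \<Rightarrow> nat" where "strict_mono \<phi>" "\<And>k l. k \<le> l \<Longrightarrow> s (\<phi> k) \<le> s (\<phi> l)"
proof -
  have tail_min: "\<exists>j\<ge>k. \<forall>i\<ge>j. s j \<le> s i" for k
  proof -
    obtain j where j: "j \<ge> k" "s j = (LEAST v. \<exists>j\<ge>k. s j = v)"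
      using LeastI_ex[of "\<lambda>v. \<exists>j\<ge>k. s j = v"] by blast
    then have "s j \<le> s i" if "i \<ge> j" for i
      unfolding j(2) using that j(1) by (intro Least_le exI[of _ i]) auto
    with j show ?thesis by blast
  qed
  obtain \<phi> where \<phi>: "\<And>k. (\<forall>i\<ge>\<phi> k. s (\<phi> k) \<le> s i) \<and> \<phi> k < \<phi> (Suc k)"
  proof -
    have "\<exists>\<phi>. \<forall>k. (\<forall>i\<ge>\<phi> k. s (\<phi> k) \<le> s i) \<and> \<phi> k < \<phi> (Suc k)"
    proof (rule dependent_nat_choice)
      show "\<exists>j. \<forall>i\<ge>j. s j \<le> s i" using tail_min by blast
      show "\<exists>j'. (\<forall>i\<ge>j'. s j' \<le> s i) \<and> j < j'" for j
        using tail_min[of "Suc j"] by (auto simp: Suc_le_eq)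
    qed
    then show ?thesis using that by blast
  qed
  then have "strict_mono \<phi>" by (simp add: strict_mono_Suc_iff)
  moreover have "s (\<phi> k) \<le> s (\<phi> l)" if "k \<le> l" for k l
    using \<phi>[of k] strict_mono_less_eq[OF calculation] that by blast
  ultimately show ?thesis using that by blast
qed

lemma dickson_subseq:
  fixes f :: "nat \<Rightarrow> nat list"
  assumes "\<And>k. length (f k) = n"
  obtains \<phi> :: "nat \<Rightarrow> nat" where "strict_mono \<phi>" "\<And>k l. k \<le> l \<Longrightarrow> list_all2 (\<le>) (f (\<phi> k)) (f (\<phi> l))"
  using assms
proof (induction n arbitrary: f thesis)
  case 0
  show ?case
  proof (rule "0.prems"(1)[of "\<lambda>k::nat. k"])
    show "strict_mono (\<lambda>k::nat. k)" by (rule strict_mono_on_ident)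
    show "list_all2 (\<le>) (f k) (f l)" if "k \<le> l" for k l
      using "0.prems"(2)[of k] "0.prems"(2)[of l] by simp
  qed
next
  case (Suc n)
  have f_Cons: "f k = hd (f k) # tl (f k)" for k
    using Suc.prems(2)[of k] by (cases "f k") auto
  obtain \<phi>1 :: "nat \<Rightarrow> nat" where \<phi>1: "strict_mono \<phi>1" "\<And>k l. k \<le> l \<Longrightarrow> list_all2 (\<le>) (tl (f (\<phi>1 k))) (tl (f (\<phi>1 l)))"
    by (rule Suc.IH[where f = "\<lambda>k. tl (f k)"]) (simp_all add: Suc.prems(2))
  obtain \<phi>2 :: "nat \<Rightarrow> nat" where \<phi>2: "strict_mono \<phi>2" "\<And>k l. k \<le> l \<Longrightarrow> hd (f (\<phi>1 (\<phi>2 k))) \<le> hd (f (\<phi>1 (\<phi>2 l)))"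
    using nat_seq_monotone_subseq[of "\<lambda>k. hd (f (\<phi>1 k))"] by blast
  have le: "list_all2 (\<le>) (f (\<phi>1 (\<phi>2 k))) (f (\<phi>1 (\<phi>2 l)))" if "k \<le> l" for k l
    using \<phi>1(2)[of "\<phi>2 k" "\<phi>2 l"] strict_mono_less_eq[OF \<phi>2(1)] \<phi>2(2)[OF that] that
    by (subst (1 2) f_Cons) simp
  have "strict_mono (\<lambda>k. \<phi>1 (\<phi>2 k))"
    using \<phi>1(1) \<phi>2(1) by (simp add: strict_mono_def)
  then show ?case using le by (rule Suc.prems(1))
qed

locale admissible_order =
  fixes n :: nat and le :: "nat list \<Rightarrow> nat list \<Rightarrow> bool"
  assumes adm_refl: "length a = n \<Longrightarrow> le a a"
    and adm_antisym: "length a = n \<Longrightarrow> length b = n \<Longrightarrow> le a b \<Longrightarrow> le b a \<Longrightarrow> a = b"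
    and adm_trans: "length a = n \<Longrightarrow> length b = n \<Longrightarrow> length c = n \<Longrightarrow> le a b \<Longrightarrow> le b c \<Longrightarrow> le a c"
    and adm_total: "length a = n \<Longrightarrow> length b = n \<Longrightarrow> le a b \<or> le b a"
    and adm_addE_mono:
      "length a = n \<Longrightarrow> length b = n \<Longrightarrow> length c = n \<Longrightarrow> le a b \<Longrightarrow> le (addE a c) (addE b c)"
    and adm_zero_le: "length a = n \<Longrightarrow> le (replicate n 0) a"

lemma admissible_order_of_admissible:
  assumes "admissible n le"
  shows "admissible_order n le"
proof
  have antisym: "\<forall>\<alpha>\<in>Ex n. \<forall>\<beta>\<in>Ex n. le \<alpha> \<beta> \<and> le \<beta> \<alpha> \<longrightarrow> \<alpha> = \<beta>"
    using assms by (unfold admissible_def) (elim conjE, assumption)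
  show "a = b" if "length a = n" "length b = n" "le a b" "le b a" for a b
    using antisym[rule_format, of a b] that by (simp add: Ex_def)
qed (use assms in \<open>unfold admissible_def Ex_def, blast+\<close>)

context admissible_order
begin

lemma adm_le_addE: "length a = n \<Longrightarrow> length d = n \<Longrightarrow> le a (addE a d)"
  using adm_addE_mono[of "replicate n 0" d a] adm_zero_le[of d] by (simp add: addE_commute)

lemma list_all2_imp_adm_le:
  assumes "length a = n" "list_all2 (\<le>) a b"
  shows "le a b"
proof -
  have "b = addE a (map2 (-) b a)"
    using assms(2) by (intro nth_equalityI) (auto simp: list_all2_conv_all_nth)
  then show ?thesis
    using adm_le_addE[of a "map2 (-) b a"] assms by (simp add: list_all2_lengthD)
qed

lemma adm_less_le_trans:
  assumes "length a = n" "length b = n" "length c = n" "strict le a b" "le b c"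
  shows "strict le a c"
  using assms adm_trans[of a b c] adm_antisym[of a b] unfolding strict_def by blast

lemma adm_less_trans:
  "length a = n \<Longrightarrow> length b = n \<Longrightarrow> length c = n \<Longrightarrow> strict le a b \<Longrightarrow> strict le b c \<Longrightarrow> strict le a c"
  using adm_less_le_trans unfolding strict_def[of le b c] by blast

lemma adm_not_less_zero: "length a = n \<Longrightarrow> \<not> strict le a (replicate n 0)"
  using adm_zero_le[of a] adm_antisym[of a "replicate n 0"] unfolding strict_def by auto

lemma adm_addE_strict_mono:
  assumes "length a = n" "length b = n" "length c = n" "strict le a b"
  shows "strict le (addE a c) (addE b c)"
  using assms adm_addE_mono[of a b c] addE_right_cancel[of a c b] unfolding strict_def by auto

lemma adm_less_addE_eps: "length a = n \<Longrightarrow> i < n \<Longrightarrow> strict le a (addE a (eps n i))"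
  unfolding strict_def using adm_le_addE[of a "eps n i"]
  by (auto dest: arg_cong[where f = "\<lambda>l. l ! i"] simp: nth_eps)

lemma wf_adm_less: "wf {(a, b). length a = n \<and> length b = n \<and> strict le a b}"
proof (rule ccontr)
  assume "\<not> ?thesis"
  then obtain f where f: "\<And>k. length (f k) = n" "\<And>k. strict le (f (Suc k)) (f k)"
    unfolding wf_iff_no_infinite_down_chain by auto
  have descending: "strict le (f l) (f k)" if "k < l" for k l
    using that
  proof (induction l)
    case (Suc l)
    then show ?case
      using f(2)[of l] adm_less_trans[of "f (Suc l)" "f l" "f k"] f(1) by (cases "k = l") auto
  qed simp
  obtain \<phi> :: "nat \<Rightarrow> nat" where "strict_mono \<phi>"
    "\<And>k l. k \<le> l \<Longrightarrow> list_all2 (\<le>) (f (\<phi> k)) (f (\<phi> l))"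
    using dickson_subseq f(1) by blast
  then have "le (f (\<phi> 0)) (f (\<phi> 1))" and "strict le (f (\<phi> 1)) (f (\<phi> 0))"
    using list_all2_imp_adm_le f(1) descending by (auto simp: strict_mono_def)
  then show False
    using adm_antisym f(1) unfolding strict_def by blast
qed

end

section \<open>Strict total orders and leading exponents\<close>

definition strict_total_order_on :: "'a set \<Rightarrow> ('a \<Rightarrow> 'a \<Rightarrow> bool) \<Rightarrow> bool" where
  "strict_total_order_on D lt \<longleftrightarrow> irreflp_on D lt \<and> transp_on D lt \<and> totalp_on D lt"

lemma (in admissible_order) strict_total_order_on_adm_less:
  "strict_total_order_on (Ex n) (strict le)"
  unfolding strict_total_order_on_def
proof (intro conjI)
  show "irreflp_on (Ex n) (strict le)"
    by (simp add: irreflp_on_def strict_def)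
  show "transp_on (Ex n) (strict le)"
    unfolding transp_on_def Ball_def Ex_iff using adm_less_trans by blast
  show "totalp_on (Ex n) (strict le)"
    unfolding totalp_on_def Ball_def Ex_iff strict_def using adm_total by blast
qed

lemma strict_total_order_on_greater_nat: "strict_total_order_on UNIV ((>) :: nat \<Rightarrow> nat \<Rightarrow> bool)"
  by (simp add: strict_total_order_on_def irreflp_on_def transp_on_def totalp_on_def)

lemma strict_total_order_on_lex:
  assumes "strict_total_order_on E1 lt1" "strict_total_order_on E2 lt2"
    and "\<And>a. a \<in> D \<Longrightarrow> k1 a \<in> E1" "\<And>a. a \<in> D \<Longrightarrow> k2 a \<in> E2"
    and "\<And>a b. a \<in> D \<Longrightarrow> b \<in> D \<Longrightarrow> k1 a = k1 b \<Longrightarrow> k2 a = k2 b \<Longrightarrow> a = b"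
  shows "strict_total_order_on D (\<lambda>a b. lt1 (k1 a) (k1 b) \<or> k1 a = k1 b \<and> lt2 (k2 a) (k2 b))"
  using assms unfolding strict_total_order_on_def irreflp_on_def transp_on_def totalp_on_def
  by (intro conjI ballI impI; metis)

lemma strict_total_order_on_modord:
  assumes "strict_total_order_on D lt"
  shows "strict_total_order_on (D \<times> UNIV) (modord istop lt)"
proof -
  have "strict_total_order_on (D \<times> UNIV) (TOP lt)"
    using strict_total_order_on_lex[OF assms strict_total_order_on_greater_nat, of "D \<times> UNIV" fst snd]
    unfolding TOP_def by (auto simp: prod_eq_iff)
  moreover have "strict_total_order_on (D \<times> UNIV) (POT lt)"
    using strict_total_order_on_lex[OF strict_total_order_on_greater_nat assms, of "D \<times> UNIV" snd fst]
    unfolding POT_def by (auto simp: prod_eq_iff)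
  ultimately show ?thesis by (simp add: modord_def)
qed

lemma lead_eqI:
  assumes "strict_total_order_on D lt" "S \<subseteq> D" "e \<in> S" "\<And>e'. e' \<in> S \<Longrightarrow> e' \<noteq> e \<Longrightarrow> lt e' e"
  shows "lead lt S = e"
  unfolding lead_def
proof (rule the_equality)
  fix e2 assume e2: "e2 \<in> S \<and> (\<forall>e'\<in>S. e' \<noteq> e2 \<longrightarrow> lt e' e2)"
  show "e2 = e"
  proof (rule ccontr)
    assume "e2 \<noteq> e"
    then have "lt e2 e" "lt e e2" using assms(3,4) e2 by auto
    then show False
      using assms(1-3) e2 unfolding strict_total_order_on_def irreflp_on_def transp_on_def
      by (meson subsetD)
  qed
qed (use assms in blast)

lemma lead_greatest:
  assumes "strict_total_order_on D lt" "finite S" "S \<noteq> {}" "S \<subseteq> D"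
  shows "lead lt S \<in> S" "\<And>e. e \<in> S \<Longrightarrow> e \<noteq> lead lt S \<Longrightarrow> lt e (lead lt S)"
proof -
  have on_S: "irreflp_on S lt" "transp_on S lt" "totalp_on S lt"
    using assms(1,4) unfolding strict_total_order_on_def
    by (auto intro: irreflp_on_subset transp_on_subset totalp_on_subset)
  then have "asymp_on S lt"
    by (auto simp: asymp_on_def irreflp_on_def transp_on_def)
  then obtain m where "m \<in> S" "\<forall>e\<in>S. e \<noteq> m \<longrightarrow> \<not> lt m e"
    using Finite_Set.bex_max_element[OF assms(2) _ on_S(2) assms(3)] by blast
  then have m: "m \<in> S" "\<And>e. e \<in> S \<Longrightarrow> e \<noteq> m \<Longrightarrow> lt e m"
    using on_S(3) unfolding totalp_on_def by auto
  then have "lead lt S = m" by (rule lead_eqI[OF assms(1,4)])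
  with m show "lead lt S \<in> S" "\<And>e. e \<in> S \<Longrightarrow> e \<noteq> lead lt S \<Longrightarrow> lt e (lead lt S)"
    by auto
qed

lemma expv_greatest:
  assumes "strict_total_order_on D lt" "finite (supp_vec coef s f)" "supp_vec coef s f \<noteq> {}"
    "supp_vec coef s f \<subseteq> D \<times> UNIV"
  shows "expv coef (modord istop lt) s f \<in> supp_vec coef s f"
    "\<And>z. z \<in> supp_vec coef s f \<Longrightarrow> z \<noteq> expv coef (modord istop lt) s f \<Longrightarrow>
      modord istop lt z (expv coef (modord istop lt) s f)"
  unfolding expv_def using lead_greatest[OF strict_total_order_on_modord[OF assms(1)] assms(2-4)]
  by blast+

lemma expv_eqI:
  assumes "strict_total_order_on D lt" "supp_vec coef s f \<subseteq> D \<times> UNIV" "z \<in> supp_vec coef s f"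
    "\<And>z'. z' \<in> supp_vec coef s f \<Longrightarrow> z' \<noteq> z \<Longrightarrow> modord istop lt z' z"
  shows "expv coef (modord istop lt) s f = z"
  unfolding expv_def by (rule lead_eqI[OF strict_total_order_on_modord[OF assms(1)] assms(2-4)])

section \<open>Products of standard monomials in a PBW algebra\<close>

lemma mon_replicate_0 [simp]: "mon x n (replicate n 0) = 1"
proof -
  have "map (\<lambda>k. x k ^ (replicate n 0 ! k)) [0..<n] = replicate n 1"
    by (intro nth_equalityI) auto
  then show ?thesis by (simp add: mon_def)
qed

lemma mon_split_at_first_var:
  assumes "i < n" "\<And>k. k < i \<Longrightarrow> \<delta> ! k = 0"
  shows "mon x n \<delta> = x i ^ (\<delta> ! i) * prod_list (map (\<lambda>k. x k ^ (\<delta> ! k)) [Suc i..<n])"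
proof -
  have "[0..<n] = [0..<i] @ i # [Suc i..<n]"
    using assms(1) upt_add_eq_append[of 0 i "n - i"] upt_conv_Cons[of i n] by simp
  moreover have "map (\<lambda>k. x k ^ (\<delta> ! k)) [0..<i] = replicate i 1"
    using assms(2) by (intro nth_equalityI) auto
  ultimately show ?thesis by (simp add: mon_def)
qed

lemma var_mult_mon:
  assumes "i < n" "length \<delta> = n" "\<And>k. k < i \<Longrightarrow> \<delta> ! k = 0"
  shows "x i * mon x n \<delta> = mon x n (addE \<delta> (eps n i))"
proof -
  let ?\<delta>' = "addE \<delta> (eps n i)"
  have \<delta>': "?\<delta>' ! k = \<delta> ! k + (if k = i then 1 else 0)" if "k < n" for k
    using that assms(2) by (simp add: nth_eps)
  have "mon x n ?\<delta>' = x i ^ (?\<delta>' ! i) * prod_list (map (\<lambda>k. x k ^ (?\<delta>' ! k)) [Suc i..<n])"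
    using assms \<delta>' by (intro mon_split_at_first_var) auto
  also have "map (\<lambda>k. x k ^ (?\<delta>' ! k)) [Suc i..<n] = map (\<lambda>k. x k ^ (\<delta> ! k)) [Suc i..<n]"
    by (rule map_cong) (auto simp: \<delta>')
  also have "x i ^ (?\<delta>' ! i) = x i * x i ^ (\<delta> ! i)"
    using assms(1) \<delta>' by simp
  finally show ?thesis
    using mon_split_at_first_var[OF assms(1,3), where x = x] by (simp add: mult.assoc)
qed

lemma mon_eps: "j < n \<Longrightarrow> mon x n (eps n j) = x j"
  using var_mult_mon[of j n "replicate n 0" x] by simp

lemma split_first_var:
  assumes "length a = n" "k < n" "a ! k \<noteq> 0"
  obtains i a' where "i \<le> k" "length a' = n" "\<And>l. l < i \<Longrightarrow> a' ! l = 0" "a = addE a' (eps n i)"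
proof
  let ?i = "LEAST l. a ! l \<noteq> 0"
  show "?i \<le> k" using assms(3) by (rule Least_le)
  then show "a = addE (a[?i := a ! ?i - 1]) (eps n ?i)"
    using assms LeastI[of "\<lambda>l. a ! l \<noteq> 0" k] by (simp add: addE_eps)
qed (use assms not_less_Least in auto)

section \<open>The multiplication map of the enveloping algebra\<close>

lemma finite_support_sum:
  assumes "finite A" "\<And>a. a \<in> A \<Longrightarrow> finite {p. c a p \<noteq> 0}"
  shows "finite {p. (\<Sum>a\<in>A. c a p) \<noteq> (0::'b::comm_monoid_add)}"
proof (rule finite_subset)
  show "{p. (\<Sum>a\<in>A. c a p) \<noteq> 0} \<subseteq> (\<Union>a\<in>A. {p. c a p \<noteq> 0})"
  proof
    fix p assume "p \<in> {p. (\<Sum>a\<in>A. c a p) \<noteq> 0}"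
    then obtain a where "a \<in> A" "c a p \<noteq> 0"
      by (auto elim: sum.not_neutral_contains_not_neutral)
    then show "p \<in> (\<Union>a\<in>A. {p. c a p \<noteq> 0})" by blast
  qed
qed (use assms in blast)

lemma envc_finite_support: "c \<in> envc n \<Longrightarrow> finite {p. c p \<noteq> 0}"
  by (simp add: envc_def)

lemma envvecs_envc: "F \<in> envvecs n s \<Longrightarrow> F i \<in> envc n"
  by (cases "i < s") (auto simp: envvecs_def envc_def)

lemma envvecs_support: "F \<in> envvecs n s \<Longrightarrow> F j p \<noteq> 0 \<Longrightarrow> p \<in> Ex n \<times> Ex n"
  using envvecs_envc[of F n s j] unfolding envc_def by (cases p) auto

lemma mon_split_first_var:
  assumes "length a = n" "k < n" "a ! k \<noteq> 0"
  obtains i a' where "i \<le> k" "length a' = n" "\<And>l. l < i \<Longrightarrow> a' ! l = 0"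
    "a = addE a' (eps n i)" "mon x n a = x i * mon x n a'"
proof -
  obtain i a' where i: "i \<le> k" "length a' = n" "\<And>l. l < i \<Longrightarrow> a' ! l = 0" "a = addE a' (eps n i)"
    using split_first_var[OF assms] by blast
  moreover have "mon x n a = x i * mon x n a'"
    using i assms(2) var_mult_mon[of i n a' x] by simp
  ultimately show ?thesis using that by blast
qed

locale pbw_algebra = admissible_order n le
  for sc :: "'k::field \<Rightarrow> 'r::ring_1" and x :: "nat \<Rightarrow> 'r" and n le +
  assumes pbw: "pbw sc x n le"
begin

lemma k_algebra_sc: "k_algebra sc"
  using pbw unfolding pbw_def by (elim conjE) assumption

lemma sc_1 [simp]: "sc 1 = 1"
  and sc_add: "sc (a + b) = sc a + sc b"
  and sc_mult: "sc (a * b) = sc a * sc b"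
  and sc_commute: "sc a * r = r * sc a"
  using k_algebra_sc unfolding k_algebra_def by blast+

lemma sc_0 [simp]: "sc 0 = 0"
  using sc_add[of 0 0] by simp

lemma sc_sum: "sc (\<Sum>t\<in>T. f t) = (\<Sum>t\<in>T. sc (f t))"
  by (induction T rule: infinite_finite_induct) (auto simp: sc_add)

lemma sc_mult_interchange: "sc (a * b) * (r * r') = sc a * r * (sc b * r')"
proof -
  have "sc (a * b) * (r * r') = sc a * (sc b * r) * r'" by (simp add: sc_mult mult.assoc)
  also have "\<dots> = sc a * r * (sc b * r')" by (simp only: sc_commute[of b r] mult.assoc)
  finally show ?thesis .
qed

lemma sc_left_commute: "r * (sc a * r') = sc a * (r * r')"
  by (metis mult.assoc sc_commute)

lemma pbw_relation:
  assumes "i < j" "j < n"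
  obtains q p where "fsupp n p" "\<And>\<alpha>. p \<alpha> \<noteq> 0 \<Longrightarrow> strict le \<alpha> (addE (eps n i) (eps n j))"
    "x j * x i = sc q * x i * x j + lin sc x n p"
proof -
  have "\<forall>i j. i < j \<and> j < n \<longrightarrow> (\<exists>q p. q \<noteq> 0 \<and> fsupp n p \<and>
      (\<forall>\<alpha>. p \<alpha> \<noteq> 0 \<longrightarrow> strict le \<alpha> (addE (eps n i) (eps n j))) \<and>
      x j * x i = sc q * x i * x j + lin sc x n p)"
    using pbw unfolding pbw_def by (elim conjE) assumption
  with assms that show ?thesis by blast
qed

lemma var_mult_var_mult:
  assumes "i < j" "j < n"
  obtains q p where "fsupp n p" "\<And>\<gamma>. p \<gamma> \<noteq> 0 \<Longrightarrow> strict le \<gamma> (addE (eps n i) (eps n j))"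
    "x j * (x i * r) = sc q * (x i * (x j * r)) + (\<Sum>\<gamma>\<in>{\<gamma>. p \<gamma> \<noteq> 0}. sc (p \<gamma>) * (mon x n \<gamma> * r))"
proof -
  obtain q p where p: "fsupp n p" "\<And>\<gamma>. p \<gamma> \<noteq> 0 \<Longrightarrow> strict le \<gamma> (addE (eps n i) (eps n j))"
    and rel: "x j * x i = sc q * x i * x j + lin sc x n p"
    using pbw_relation[OF assms] by metis
  have "x j * (x i * r) = sc q * (x i * (x j * r)) + (\<Sum>\<gamma>\<in>{\<gamma>. p \<gamma> \<noteq> 0}. sc (p \<gamma>) * (mon x n \<gamma> * r))"
    unfolding mult.assoc[symmetric, of "x j"] rel lin_def by (simp add: algebra_simps sum_distrib_right)
  with p that show ?thesis by blast
qed

lemma pbw_basis: "\<exists>!c. fsupp n c \<and> r = lin sc x n c"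
proof -
  have "\<forall>r. \<exists>!c. fsupp n c \<and> r = lin sc x n c"
    using pbw unfolding pbw_def by (elim conjE) assumption
  then show ?thesis by (rule spec)
qed

lemma cf_unique: "fsupp n c \<Longrightarrow> r = lin sc x n c \<Longrightarrow> cf sc x n r = c"
  unfolding cf_def using pbw_basis by (rule the1_equality) simp

lemma fsupp_cf: "fsupp n (cf sc x n r)"
  and lin_cf [simp]: "lin sc x n (cf sc x n r) = r"
  using theI'[OF pbw_basis[of r]] by (simp_all add: cf_def)

lemma finite_cf_support: "finite {\<alpha>. cf sc x n r \<alpha> \<noteq> 0}"
  and length_cf_support: "cf sc x n r \<alpha> \<noteq> 0 \<Longrightarrow> length \<alpha> = n"
  using fsupp_cf[of r] by (simp_all add: fsupp_def)

lemma lin_eq_sum_superset: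
  "finite S \<Longrightarrow> {\<alpha>. c \<alpha> \<noteq> 0} \<subseteq> S \<Longrightarrow> lin sc x n c = (\<Sum>\<alpha>\<in>S. sc (c \<alpha>) * mon x n \<alpha>)"
  unfolding lin_def by (rule sum.mono_neutral_left) auto

lemma cf_lincomb:
  assumes "finite T"
  shows "cf sc x n (\<Sum>t\<in>T. sc (a t) * r t) = (\<lambda>\<alpha>. \<Sum>t\<in>T. a t * cf sc x n (r t) \<alpha>)"
    (is "_ = ?c")
proof (rule cf_unique)
  define S where "S = (\<Union>t\<in>T. {\<alpha>. cf sc x n (r t) \<alpha> \<noteq> 0})"
  have "finite S" unfolding S_def using assms finite_cf_support by blast
  have "{\<alpha>. ?c \<alpha> \<noteq> 0} \<subseteq> S"
  proof
    fix \<alpha> assume "\<alpha> \<in> {\<alpha>. ?c \<alpha> \<noteq> 0}"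
    then obtain t where "t \<in> T" "a t * cf sc x n (r t) \<alpha> \<noteq> 0"
      by (auto elim: sum.not_neutral_contains_not_neutral)
    then show "\<alpha> \<in> S" unfolding S_def by auto
  qed
  with \<open>finite S\<close> show "fsupp n ?c"
    unfolding fsupp_def S_def by (auto dest: finite_subset length_cf_support)
  have "lin sc x n ?c = (\<Sum>\<alpha>\<in>S. \<Sum>t\<in>T. sc (a t) * (sc (cf sc x n (r t) \<alpha>) * mon x n \<alpha>))"
    using lin_eq_sum_superset[OF \<open>finite S\<close> \<open>{\<alpha>. ?c \<alpha> \<noteq> 0} \<subseteq> S\<close>]
    by (simp add: sc_sum sc_mult sum_distrib_right mult.assoc)
  also have "\<dots> = (\<Sum>t\<in>T. sc (a t) * (\<Sum>\<alpha>\<in>S. sc (cf sc x n (r t) \<alpha>) * mon x n \<alpha>))"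
    by (subst sum.swap) (simp add: sum_distrib_left)
  also have "\<dots> = (\<Sum>t\<in>T. sc (a t) * r t)"
  proof (rule sum.cong[OF refl])
    fix t assume "t \<in> T"
    then have "{\<alpha>. cf sc x n (r t) \<alpha> \<noteq> 0} \<subseteq> S" unfolding S_def by blast
    from lin_eq_sum_superset[OF \<open>finite S\<close> this]
    show "sc (a t) * (\<Sum>\<alpha>\<in>S. sc (cf sc x n (r t) \<alpha>) * mon x n \<alpha>) = sc (a t) * r t"
      by simp
  qed
  finally show "(\<Sum>t\<in>T. sc (a t) * r t) = lin sc x n ?c" by simp
qed

lemma cf_0 [simp]: "cf sc x n 0 = (\<lambda>_. 0)"
  using cf_lincomb[of "{}"] by simp

lemma cf_mon: "length e = n \<Longrightarrow> cf sc x n (mon x n e) = (\<lambda>\<alpha>. if \<alpha> = e then 1 else 0)"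
  by (rule cf_unique) (auto simp: fsupp_def lin_def)

definition filt :: "nat list \<Rightarrow> 'r set" where
  "filt e = {r. \<forall>\<gamma>. cf sc x n r \<gamma> \<noteq> 0 \<longrightarrow> le \<gamma> e}"

lemma lincomb_in_filt:
  assumes "finite T" "\<And>t. t \<in> T \<Longrightarrow> r t \<in> filt e"
  shows "(\<Sum>t\<in>T. sc (a t) * r t) \<in> filt e"
proof (unfold filt_def, intro CollectI allI impI)
  fix \<gamma> assume "cf sc x n (\<Sum>t\<in>T. sc (a t) * r t) \<gamma> \<noteq> 0"
  then have "(\<Sum>t\<in>T. a t * cf sc x n (r t) \<gamma>) \<noteq> 0"
    by (simp add: cf_lincomb[OF assms(1)])
  then obtain t where "t \<in> T" "a t * cf sc x n (r t) \<gamma> \<noteq> 0"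
    by (rule sum.not_neutral_contains_not_neutral)
  then show "le \<gamma> e" using assms(2) unfolding filt_def by auto
qed

lemma add_in_filt: "r \<in> filt e \<Longrightarrow> r' \<in> filt e \<Longrightarrow> r + r' \<in> filt e"
  using lincomb_in_filt[of "{True, False}" "\<lambda>b. if b then r else r'" e "\<lambda>_. 1"] by simp

lemma scale_in_filt: "r \<in> filt e \<Longrightarrow> sc c * r \<in> filt e"
  using lincomb_in_filt[of "{()}" "\<lambda>_. r" e "\<lambda>_. c"] by simp

lemma filt_mono: "length e = n \<Longrightarrow> length e' = n \<Longrightarrow> le e e' \<Longrightarrow> r \<in> filt e \<Longrightarrow> r \<in> filt e'"
  unfolding filt_def using adm_trans length_cf_support by blast

lemma mon_in_filt: "length e = n \<Longrightarrow> mon x n e \<in> filt e"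
  by (simp add: filt_def cf_mon adm_refl)

lemma left_mult_in_filt:
  assumes "r \<in> filt e" "\<And>\<delta>. length \<delta> = n \<Longrightarrow> le \<delta> e \<Longrightarrow> y * mon x n \<delta> \<in> filt e'"
  shows "y * r \<in> filt e'"
proof -
  have "y * r = (\<Sum>\<alpha>\<in>{\<alpha>. cf sc x n r \<alpha> \<noteq> 0}. sc (cf sc x n r \<alpha>) * (y * mon x n \<alpha>))"
    by (subst (1) lin_cf[symmetric, of r]) (simp add: lin_def sum_distrib_left sc_left_commute)
  also have "\<dots> \<in> filt e'"
    using assms length_cf_support unfolding filt_def[of e]
    by (intro lincomb_in_filt finite_cf_support) auto
  finally show ?thesis .
qed

lemma mon_mult_mon_in_filt_below:
  assumes IH: "\<And>a b. length a = n \<Longrightarrow> length b = n \<Longrightarrow> strict le (addE a b) e \<Longrightarrow>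
      mon x n a * mon x n b \<in> filt (addE a b)"
    and "length a = n" "length b = n" "length e = n" "strict le (addE a b) e"
  shows "mon x n a * mon x n b \<in> filt e"
  using IH[OF assms(2,3,5)] assms(2-5) by (intro filt_mono[of "addE a b" e]) (simp_all add: strict_def)

lemma var_mult_in_filt:
  assumes IH: "\<And>a b. length a = n \<Longrightarrow> length b = n \<Longrightarrow> strict le (addE a b) e \<Longrightarrow>
      mon x n a * mon x n b \<in> filt (addE a b)"
    and i: "i < n" and e': "length e' = n" "e = addE e' (eps n i)"
    and top: "x i * mon x n e' \<in> filt e" and r: "r \<in> filt e'"
  shows "x i * r \<in> filt e"
proof (rule left_mult_in_filt[OF r])
  fix \<delta> assume \<delta>: "length \<delta> = n" "le \<delta> e'"
  show "x i * mon x n \<delta> \<in> filt e"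
  proof (cases "\<delta> = e'")
    case False
    then have less: "strict le (addE (eps n i) \<delta>) e"
      using adm_addE_strict_mono[of \<delta> e' "eps n i"] \<delta> e' by (simp add: strict_def addE_commute)
    have "length e = n" using e' by simp
    have "mon x n (eps n i) * mon x n \<delta> \<in> filt e"
      by (rule mon_mult_mon_in_filt_below[OF _ length_eps \<delta>(1) \<open>length e = n\<close> less]) (fact IH)
    then show ?thesis using mon_eps[OF i, where x = x] by simp
  qed (use top in simp)
qed

(* x_j x_i x^a' is rewritten with the PBW relation; all correction terms have exponents
   strictly below e, so the induction hypothesis covers them. *)
lemma var_mult_var_mult_mon_in_filt:
  assumes IH: "\<And>a b. length a = n \<Longrightarrow> length b = n \<Longrightarrow> strict le (addE a b) e \<Longrightarrow>
      mon x n a * mon x n b \<in> filt (addE a b)"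
    and i: "i < j" and j: "j < n" and a': "length a' = n" "\<And>l. l < i \<Longrightarrow> a' ! l = 0"
    and e: "e = addE (addE a' (eps n i)) (eps n j)"
  shows "x j * (x i * mon x n a') \<in> filt e"
proof -
  define e' where "e' = addE a' (eps n j)"
  have e': "length e' = n" "e = addE e' (eps n i)"
    using a' e by (simp_all add: e'_def addE_assoc addE_commute[of "eps n i"])
  have len_e: "length e = n" using e a' by simp
  obtain q p where p: "fsupp n p" "\<And>\<gamma>. p \<gamma> \<noteq> 0 \<Longrightarrow> strict le \<gamma> (addE (eps n i) (eps n j))"
    and rel: "x j * (x i * mon x n a') = sc q * (x i * (x j * mon x n a')) +
      (\<Sum>\<gamma>\<in>{\<gamma>. p \<gamma> \<noteq> 0}. sc (p \<gamma>) * (mon x n \<gamma> * mon x n a'))"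
    using var_mult_var_mult[OF i j] by blast
  show ?thesis
    unfolding rel
  proof (intro add_in_filt scale_in_filt lincomb_in_filt)
    have "x i * mon x n e' = mon x n e"
      using var_mult_mon[of i n e' x] a' i j e' by (simp add: e'_def nth_eps)
    then have top: "x i * mon x n e' \<in> filt e"
      using mon_in_filt[OF len_e] by simp
    have r: "x j * mon x n a' \<in> filt e'"
      using IH[of "eps n j" a'] a' e' j i adm_less_addE_eps[OF e'(1), of i]
      by (simp add: e'_def addE_commute mon_eps[OF j, where x = x])
    have "i < n" using i j by simp
    show "x i * (x j * mon x n a') \<in> filt e"
      by (rule var_mult_in_filt[OF _ \<open>i < n\<close> e' top r]) (fact IH)
    show "finite {\<gamma>. p \<gamma> \<noteq> 0}" using p(1) by (simp add: fsupp_def)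
    fix \<gamma> assume "\<gamma> \<in> {\<gamma>. p \<gamma> \<noteq> 0}"
    then have \<gamma>: "length \<gamma> = n" "strict le \<gamma> (addE (eps n i) (eps n j))"
      using p unfolding fsupp_def by auto
    have "e = addE (addE (eps n i) (eps n j)) a'"
      using e by (simp add: addE_commute addE_left_commute)
    then have less: "strict le (addE \<gamma> a') e"
      using adm_addE_strict_mono[OF \<gamma>(1) _ a'(1) \<gamma>(2)] by simp
    show "mon x n \<gamma> * mon x n a' \<in> filt e"
      by (rule mon_mult_mon_in_filt_below[OF _ \<gamma>(1) a'(1) len_e less]) (fact IH)
  qed
qed

lemma var_mult_mon_in_filt_step:
  assumes IH: "\<And>a b. length a = n \<Longrightarrow> length b = n \<Longrightarrow> strict le (addE a b) e \<Longrightarrow>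
      mon x n a * mon x n b \<in> filt (addE a b)"
    and j: "j < n" and a: "length a = n" "e = addE a (eps n j)"
  shows "x j * mon x n a \<in> filt e"
proof (cases "\<exists>k<j. a ! k \<noteq> 0")
  case False
  then have "x j * mon x n a = mon x n e"
    using var_mult_mon[of j n a x] j a by auto
  then show ?thesis using mon_in_filt a by simp
next
  case True
  then obtain k where k: "k < j" "a ! k \<noteq> 0" by blast
  then have "k < n" using j by simp
  obtain i a' where "i \<le> k" and a': "length a' = n" "\<And>l. l < i \<Longrightarrow> a' ! l = 0"
    and "a = addE a' (eps n i)" "mon x n a = x i * mon x n a'"
    using mon_split_first_var[OF a(1) \<open>k < n\<close> k(2)] by blast
  moreover from this have "i < j" "e = addE (addE a' (eps n i)) (eps n j)"
    using k a(2) by simp_all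
  ultimately show ?thesis
    using var_mult_var_mult_mon_in_filt[OF _ \<open>i < j\<close> j a'] IH by simp
qed

lemma mon_mult_mon_in_filt_step:
  assumes IH: "\<And>a b. length a = n \<Longrightarrow> length b = n \<Longrightarrow> strict le (addE a b) e \<Longrightarrow>
      mon x n a * mon x n b \<in> filt (addE a b)"
    and a: "length a = n" "length b = n" "e = addE a b"
  shows "mon x n a * mon x n b \<in> filt e"
proof (cases "\<exists>k<n. a ! k \<noteq> 0")
  case False
  then have "a = replicate n 0" using a(1) by (intro nth_equalityI) auto
  then show ?thesis using a mon_in_filt by simp
next
  case True
  then obtain k where k: "k < n" "a ! k \<noteq> 0" by blast
  then obtain i a' where "i \<le> k" and a': "length a' = n" "a = addE a' (eps n i)"
    and mon_a: "mon x n a = x i * mon x n a'"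
    using mon_split_first_var[OF a(1) k] by blast
  then have i: "i < n" using k by simp
  define e' where "e' = addE a' b"
  have e': "length e' = n" "e = addE e' (eps n i)"
    using a a' by (simp_all add: e'_def addE_assoc addE_commute addE_left_commute)
  have top: "x i * mon x n e' \<in> filt e"
    by (rule var_mult_mon_in_filt_step[OF _ i e']) (fact IH)
  have r: "mon x n a' * mon x n b \<in> filt e'"
    using IH[OF a'(1) a(2)] adm_less_addE_eps[OF e'(1) i] e' by (simp add: e'_def)
  have "mon x n a * mon x n b = x i * (mon x n a' * mon x n b)"
    by (simp add: mon_a mult.assoc)
  also have "\<dots> \<in> filt e"
    by (rule var_mult_in_filt[OF _ i e' top r]) (fact IH)
  finally show ?thesis .
qed

lemma mon_mult_mon_in_filt:
  assumes "length a = n" "length b = n"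
  shows "mon x n a * mon x n b \<in> filt (addE a b)"
proof -
  have "\<forall>a b. length a = n \<longrightarrow> length b = n \<longrightarrow> addE a b = e \<longrightarrow> mon x n a * mon x n b \<in> filt e"
    if "length e = n" for e
    using that
  proof (induction e rule: wf_induct[OF wf_adm_less])
    case (1 e)
    show ?case
    proof (intro allI impI)
      fix a b assume ab: "length a = n" "length b = n" "addE a b = e"
      show "mon x n a * mon x n b \<in> filt e"
      proof (rule mon_mult_mon_in_filt_step[OF _ ab(1,2) ab(3)[symmetric]])
        fix a' b' assume "length a' = n" "length b' = n" "strict le (addE a' b') e"
        then show "mon x n a' * mon x n b' \<in> filt (addE a' b')"
          using "1.IH"[rule_format, of "addE a' b'" a' b'] "1.prems" by simp
      qed
    qed
  qed
  then show ?thesis using assms by simp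
qed

lemma cf_mon_mult_mon_le:
  "length a = n \<Longrightarrow> length b = n \<Longrightarrow> cf sc x n (mon x n a * mon x n b) \<gamma> \<noteq> 0 \<Longrightarrow> le \<gamma> (addE a b)"
  using mon_mult_mon_in_filt unfolding filt_def by blast

lemma menv_eq_sum_superset:
  "finite S \<Longrightarrow> {p. c p \<noteq> 0} \<subseteq> S \<Longrightarrow>
    menv sc x n c = (\<Sum>p\<in>S. sc (c p) * mon x n (fst p) * mon x n (rev (snd p)))"
  unfolding menv_def by (rule sum.mono_neutral_left) auto

lemma menv_lincomb:
  assumes "finite A" "\<And>a. a \<in> A \<Longrightarrow> finite {p. c a p \<noteq> 0}"
  shows "menv sc x n (\<lambda>p. \<Sum>a\<in>A. k a * c a p) = (\<Sum>a\<in>A. sc (k a) * menv sc x n (c a))"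
proof -
  define S where "S = (\<Union>a\<in>A. {p. c a p \<noteq> 0})"
  have "finite S" unfolding S_def using assms by blast
  have supp: "{p. c a p \<noteq> 0} \<subseteq> S" if "a \<in> A" for a
    unfolding S_def using that by blast
  have "{p. (\<Sum>a\<in>A. k a * c a p) \<noteq> 0} \<subseteq> S"
  proof
    fix p assume "p \<in> {p. (\<Sum>a\<in>A. k a * c a p) \<noteq> 0}"
    then obtain a where "a \<in> A" "k a * c a p \<noteq> 0"
      by (auto elim: sum.not_neutral_contains_not_neutral)
    then show "p \<in> S" using supp by auto
  qed
  then have "menv sc x n (\<lambda>p. \<Sum>a\<in>A. k a * c a p) =
      (\<Sum>p\<in>S. \<Sum>a\<in>A. sc (k a) * (sc (c a p) * mon x n (fst p) * mon x n (rev (snd p))))"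
    using menv_eq_sum_superset[OF \<open>finite S\<close>]
    by (simp add: sc_sum sc_mult sum_distrib_right mult.assoc)
  also have "\<dots> = (\<Sum>a\<in>A. sc (k a) * menv sc x n (c a))"
    using menv_eq_sum_superset[OF \<open>finite S\<close> supp]
    by (subst sum.swap) (simp add: sum_distrib_left)
  finally show ?thesis .
qed

(* Coefficients of r \<otimes> r' in the basis x^mu \<otimes> x^(nu^op) of R^env. *)
definition env_tensor :: "'r \<Rightarrow> 'r \<Rightarrow> nat list \<times> nat list \<Rightarrow> 'k" where
  "env_tensor r r' = (\<lambda>(\<mu>, \<nu>). cf sc x n r \<mu> * cf sc x n r' (rev \<nu>))"

lemma support_env_tensor:
  "{m. env_tensor r r' m \<noteq> 0} \<subseteq> {\<mu>. cf sc x n r \<mu> \<noteq> 0} \<times> rev ` {\<beta>. cf sc x n r' \<beta> \<noteq> 0}"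
proof
  fix m assume "m \<in> {m. env_tensor r r' m \<noteq> 0}"
  then obtain \<mu> \<nu> where "m = (\<mu>, \<nu>)" "cf sc x n r \<mu> \<noteq> 0" "cf sc x n r' (rev \<nu>) \<noteq> 0"
    by (cases m) (auto simp: env_tensor_def)
  then show "m \<in> {\<mu>. cf sc x n r \<mu> \<noteq> 0} \<times> rev ` {\<beta>. cf sc x n r' \<beta> \<noteq> 0}"
    by (auto intro: image_eqI[of \<nu> rev "rev \<nu>"])
qed

lemma finite_support_env_tensor: "finite {m. env_tensor r r' m \<noteq> 0}"
  by (rule finite_subset[OF support_env_tensor]) (simp add: finite_cf_support)

lemma menv_env_tensor: "menv sc x n (env_tensor r r') = r * r'"
proof -
  let ?A = "{\<mu>. cf sc x n r \<mu> \<noteq> 0}" and ?B = "{\<beta>. cf sc x n r' \<beta> \<noteq> 0}"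
  have "finite (?A \<times> rev ` ?B)" using finite_cf_support by simp
  then have "menv sc x n (env_tensor r r') =
      (\<Sum>m\<in>?A \<times> rev ` ?B. sc (env_tensor r r' m) * mon x n (fst m) * mon x n (rev (snd m)))"
    by (rule menv_eq_sum_superset[OF _ support_env_tensor])
  also have "\<dots> = (\<Sum>(\<mu>, \<nu>)\<in>?A \<times> rev ` ?B.
      sc (cf sc x n r \<mu> * cf sc x n r' (rev \<nu>)) * mon x n \<mu> * mon x n (rev \<nu>))"
    by (simp add: env_tensor_def case_prod_beta)
  also have "\<dots> = (\<Sum>\<mu>\<in>?A. sc (cf sc x n r \<mu>) * mon x n \<mu>) *
      (\<Sum>\<nu>\<in>rev ` ?B. sc (cf sc x n r' (rev \<nu>)) * mon x n (rev \<nu>))"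
    by (simp add: sum_product sum.cartesian_product case_prod_beta sc_mult_interchange mult.assoc)
  also have "(\<Sum>\<nu>\<in>rev ` ?B. sc (cf sc x n r' (rev \<nu>)) * mon x n (rev \<nu>)) =
      (\<Sum>\<beta>\<in>?B. sc (cf sc x n r' \<beta>) * mon x n \<beta>)"
    by (subst sum.reindex) (auto intro: inj_onI)
  finally show ?thesis by (simp add: lin_def[symmetric])
qed

lemma env_mult_eq_sum:
  "env_mult sc x n c d = (\<lambda>m. \<Sum>pq\<in>{p. c p \<noteq> 0} \<times> {q. d q \<noteq> 0}. c (fst pq) * d (snd pq) *
     env_tensor (mon x n (fst (fst pq)) * mon x n (fst (snd pq)))
       (mon x n (rev (snd (snd pq))) * mon x n (rev (snd (fst pq)))) m)"
  unfolding env_mult_def env_tensor_def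
  by (simp add: fun_eq_iff sum.cartesian_product' mult.assoc)

lemma finite_support_env_mult:
  assumes "c \<in> envc n" "d \<in> envc n"
  shows "finite {m. env_mult sc x n c d m \<noteq> 0}"
  unfolding env_mult_eq_sum
proof (rule finite_support_sum)
  show "finite ({p. c p \<noteq> 0} \<times> {q. d q \<noteq> 0})"
    using assms envc_finite_support by blast
  fix pq :: "(nat list \<times> nat list) \<times> nat list \<times> nat list"
  show "finite {m. c (fst pq) * d (snd pq) * env_tensor (mon x n (fst (fst pq)) * mon x n (fst (snd pq)))
      (mon x n (rev (snd (snd pq))) * mon x n (rev (snd (fst pq)))) m \<noteq> 0}"
    by (rule finite_subset[OF _ finite_support_env_tensor]) auto
qed

lemma menv_env_mult:
  assumes "c \<in> envc n" "d \<in> envc n"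
  shows "menv sc x n (env_mult sc x n c d) =
    (\<Sum>p\<in>{p. c p \<noteq> 0}. sc (c p) * mon x n (fst p) * menv sc x n d * mon x n (rev (snd p)))"
proof -
  let ?P = "{p. c p \<noteq> 0}" and ?Q = "{q. d q \<noteq> 0}"
  have fin: "finite ?P" "finite ?Q" using assms envc_finite_support by blast+
  have "menv sc x n (env_mult sc x n c d) = (\<Sum>pq\<in>?P \<times> ?Q. sc (c (fst pq) * d (snd pq)) *
      (mon x n (fst (fst pq)) * mon x n (fst (snd pq)) *
       (mon x n (rev (snd (snd pq))) * mon x n (rev (snd (fst pq))))))"
    unfolding env_mult_eq_sum using fin
    by (simp add: menv_lincomb finite_support_env_tensor menv_env_tensor)
  also have "\<dots> = (\<Sum>p\<in>?P. \<Sum>q\<in>?Q. sc (c p) * mon x n (fst p) *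
      (sc (d q) * mon x n (fst q) * mon x n (rev (snd q))) * mon x n (rev (snd p)))"
    by (simp add: sum.cartesian_product' sc_mult_interchange mult.assoc)
  also have "\<dots> = (\<Sum>p\<in>?P. sc (c p) * mon x n (fst p) * menv sc x n d * mon x n (rev (snd p)))"
    by (simp add: menv_def sum_distrib_left sum_distrib_right)
  finally show ?thesis .
qed

lemma cf_menv:
  "c \<in> envc n \<Longrightarrow> cf sc x n (menv sc x n c) =
     (\<lambda>\<gamma>. \<Sum>p\<in>{p. c p \<noteq> 0}. c p * cf sc x n (mon x n (fst p) * mon x n (rev (snd p))) \<gamma>)"
  unfolding menv_def using cf_lincomb[OF envc_finite_support] by (simp add: mult.assoc)

end

lemma bispan_zero: "(\<lambda>_. 0) \<in> bispan G"
  unfolding bispan_def by (auto intro: exI[of _ "[]"])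

lemma bispan_add:
  assumes "f \<in> bispan G" "g \<in> bispan G"
  shows "(\<lambda>i. f i + g i) \<in> bispan G"
proof -
  obtain ts us where "\<forall>t\<in>set ts. fst (snd t) \<in> G" "f = (\<lambda>i. \<Sum>t\<leftarrow>ts. fst t * fst (snd t) i * snd (snd t))"
    "\<forall>t\<in>set us. fst (snd t) \<in> G" "g = (\<lambda>i. \<Sum>t\<leftarrow>us. fst t * fst (snd t) i * snd (snd t))"
    using assms unfolding bispan_def by blast
  then show ?thesis unfolding bispan_def by (intro CollectI exI[of _ "ts @ us"]) auto
qed

lemma bispan_gen: "g \<in> G \<Longrightarrow> (\<lambda>i. a * g i * b) \<in> bispan G"
  unfolding bispan_def by (auto intro!: exI[of _ "[(a, g, b)]"])

lemma bispan_sum: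
  "finite A \<Longrightarrow> (\<And>a. a \<in> A \<Longrightarrow> f a \<in> bispan G) \<Longrightarrow> (\<lambda>i. \<Sum>a\<in>A. f a i) \<in> bispan G"
  by (induction A rule: finite_induct) (auto simp: bispan_zero bispan_add)

lemma bispan_subset:
  assumes "subbimodule s M" "G \<subseteq> M"
  shows "bispan G \<subseteq> M"
proof
  fix f assume "f \<in> bispan G"
  then obtain ts where ts: "\<forall>t\<in>set ts. fst (snd t) \<in> G"
    and f: "f = (\<lambda>i. \<Sum>t\<leftarrow>ts. fst t * fst (snd t) i * snd (snd t))"
    unfolding bispan_def by blast
  from ts have "(\<lambda>i. \<Sum>t\<leftarrow>ts. fst t * fst (snd t) i * snd (snd t)) \<in> M"
    using assms unfolding subbimodule_def by (induction ts) auto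
  with f show "f \<in> M" by simp
qed

context pbw_algebra
begin

lemma ms_lspan_in_bispan:
  assumes "finite G" "G \<subseteq> envvecs n s" "F \<in> lspan sc x n G"
  shows "ms sc x n F \<in> bispan (ms sc x n ` G - {\<lambda>_. 0})"
proof -
  have G_envc: "g i \<in> envc n" if "g \<in> G" for g i
    using assms(2) that envvecs_envc by blast
  obtain h where h: "\<And>g. g \<in> G \<Longrightarrow> h g \<in> envc n"
    and F: "F = (\<lambda>i p. \<Sum>g\<in>G. env_mult sc x n (h g) (g i) p)"
    using assms(3) unfolding lspan_def by blast
  have "ms sc x n F = (\<lambda>i. \<Sum>g\<in>G. \<Sum>p\<in>{p. h g p \<noteq> 0}.
      sc (h g p) * mon x n (fst p) * ms sc x n g i * mon x n (rev (snd p)))" (is "_ = ?sum")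
  proof
    fix i
    have "ms sc x n F i = menv sc x n (\<lambda>p. \<Sum>g\<in>G. 1 * env_mult sc x n (h g) (g i) p)"
      by (simp add: F ms_def)
    also have "\<dots> = (\<Sum>g\<in>G. sc 1 * menv sc x n (env_mult sc x n (h g) (g i)))"
      by (rule menv_lincomb) (use assms(1) G_envc h finite_support_env_mult in auto)
    finally show "ms sc x n F i = ?sum i"
      using G_envc h by (simp add: menv_env_mult ms_def)
  qed
  moreover have "?sum \<in> bispan (ms sc x n ` G - {\<lambda>_. 0})"
  proof (intro bispan_sum assms(1))
    fix g p assume "g \<in> G"
    then show "finite {p. h g p \<noteq> 0}" using h envc_finite_support by blast
    show "(\<lambda>i. sc (h g p) * mon x n (fst p) * ms sc x n g i * mon x n (rev (snd p)))
        \<in> bispan (ms sc x n ` G - {\<lambda>_. 0})"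
      using \<open>g \<in> G\<close> bispan_zero[of "ms sc x n ` G - {\<lambda>_. 0}"] by (cases "ms sc x n g = (\<lambda>_. 0)") (auto intro: bispan_gen)
  qed
  ultimately show ?thesis by simp
qed

lemma finite_supp_vec_cf: "finite (supp_vec (cf sc x n) s f)"
proof (rule finite_subset)
  show "supp_vec (cf sc x n) s f \<subseteq> (\<Union>i<s. (\<lambda>e. (e, i)) ` {e. cf sc x n (f i) e \<noteq> 0})"
    unfolding supp_vec_def by blast
qed (use finite_cf_support in blast)

lemma supp_vec_cf_subset: "supp_vec (cf sc x n) s f \<subseteq> Ex n \<times> UNIV"
  unfolding supp_vec_def using length_cf_support by auto

lemma supp_vec_cf_nonempty:
  assumes "f \<in> vecs s" "f \<noteq> (\<lambda>_. 0)"
  shows "supp_vec (cf sc x n) s f \<noteq> {}"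
proof -
  obtain i where "f i \<noteq> 0" using assms(2) by blast
  moreover from this have "i < s" using assms(1) unfolding vecs_def by (cases "i < s") auto
  moreover from calculation have "cf sc x n (f i) \<noteq> (\<lambda>_. 0)"
    using lin_cf[of "f i"] by (auto simp: lin_def)
  ultimately show ?thesis unfolding supp_vec_def by auto
qed

end

lemma finite_supp_vec_env: "F \<in> envvecs n s \<Longrightarrow> finite (supp_vec (\<lambda>c. c) s F)"
proof (rule finite_subset)
  show "supp_vec (\<lambda>c. c) s F \<subseteq> (\<Union>i<s. (\<lambda>p. (p, i)) ` {p. F i p \<noteq> 0})"
    unfolding supp_vec_def by blast
qed (auto simp: envvecs_def envc_def)

lemma supp_vec_env_subset: "F \<in> envvecs n s \<Longrightarrow> supp_vec (\<lambda>c. c) s F \<subseteq> (Ex n \<times> Ex n) \<times> UNIV"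
  unfolding supp_vec_def envvecs_def envc_def by force

lemma supp_vec_env_nonempty:
  assumes "F \<in> envvecs n s" "F \<noteq> (\<lambda>_ _. 0)"
  shows "supp_vec (\<lambda>c. c) s F \<noteq> {}"
proof -
  obtain i p where "F i p \<noteq> 0" using assms(2) by blast
  moreover from this have "i < s" using assms(1) unfolding envvecs_def by (cases "i < s") auto
  ultimately have "(p, i) \<in> supp_vec (\<lambda>c. c) s F" by (simp add: supp_vec_def)
  then show ?thesis by blast
qed

lemma cone_memI: "\<gamma> \<in> \<Gamma> \<Longrightarrow> (add (fst a) \<gamma>, snd a) \<in> cone add \<Gamma> a"
  unfolding cone_def by blast

section \<open>Embeddings of the exponents of R into those of R^env\<close>

(* For the exponent (a, b) of x^a \<otimes> x^(b^op), the bound a + b^op on the exponents of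
   its image x^a x^(b^op) under m. *)
definition mult_exp :: "nat list \<times> nat list \<Rightarrow> nat list" where
  "mult_exp p = addE (fst p) (rev (snd p))"

definition emb_left :: "nat \<Rightarrow> nat list \<Rightarrow> nat list \<times> nat list" where
  "emb_left n e = (e, replicate n 0)"

definition emb_right :: "nat \<Rightarrow> nat list \<Rightarrow> nat list \<times> nat list" where
  "emb_right n e = (replicate n 0, rev e)"

locale exp_embedding =
  fixes n :: nat and emb :: "nat list \<Rightarrow> nat list \<times> nat list"
  assumes emb_eq_addE2: "p \<in> Ex n \<times> Ex n \<Longrightarrow> d \<in> Ex n \<times> Ex n \<Longrightarrow> emb e = addE2 p d \<Longrightarrow>
      \<exists>e0 \<gamma>. length e0 = n \<and> length \<gamma> = n \<and> p = emb e0 \<and> e = addE e0 \<gamma>"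
    and addE2_emb: "length a = n \<Longrightarrow> length b = n \<Longrightarrow> addE2 (emb a) (emb b) = emb (addE a b)"
    and emb_in_Ex: "length e = n \<Longrightarrow> emb e \<in> Ex n \<times> Ex n"
    and mult_exp_emb: "length e = n \<Longrightarrow> mult_exp (emb e) = e"
    and emb_one_side_zero: "length e = n \<Longrightarrow> fst (emb e) = replicate n 0 \<or> snd (emb e) = replicate n 0"
begin

lemma emb_inj: "length a = n \<Longrightarrow> length b = n \<Longrightarrow> emb a = emb b \<Longrightarrow> a = b"
  using mult_exp_emb by metis

lemma mon_emb: "length e = n \<Longrightarrow> mon x n (fst (emb e)) * mon x n (rev (snd (emb e))) = mon x n e"
  using emb_one_side_zero[of e] mult_exp_emb[of e] emb_in_Ex[of e]
  by (auto simp: mult_exp_def mem_Times_iff)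

end

lemma exp_embedding_emb_left: "exp_embedding n (emb_left n)"
proof
  fix p d e assume p: "p \<in> Ex n \<times> Ex n" and d: "d \<in> Ex n \<times> Ex n" and "emb_left n e = addE2 p d"
  then have "snd p = replicate n 0" "e = addE (fst p) (fst d)"
    using addE_eq_replicate_0_iff[of "snd p" n "snd d"] by (auto simp: emb_left_def addE2_def mem_Times_iff)
  with p d show "\<exists>e0 \<gamma>. length e0 = n \<and> length \<gamma> = n \<and> p = emb_left n e0 \<and> e = addE e0 \<gamma>"
    by (intro exI[of _ "fst p"] exI[of _ "fst d"]) (auto simp: emb_left_def mem_Times_iff prod_eq_iff)
qed (simp_all add: emb_left_def mult_exp_def)

lemma exp_embedding_emb_right: "exp_embedding n (emb_right n)"
proof
  fix p d e assume p: "p \<in> Ex n \<times> Ex n" and d: "d \<in> Ex n \<times> Ex n" and "emb_right n e = addE2 p d"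
  then have "fst p = replicate n 0" "rev e = addE (snd p) (snd d)"
    using addE_eq_replicate_0_iff[of "fst p" n "fst d"] by (auto simp: emb_right_def addE2_def mem_Times_iff)
  moreover from this have "e = addE (rev (snd p)) (rev (snd d))"
    using p d by (metis rev_addE rev_rev_ident mem_Times_iff Ex_iff)
  ultimately show "\<exists>e0 \<gamma>. length e0 = n \<and> length \<gamma> = n \<and> p = emb_right n e0 \<and> e = addE e0 \<gamma>"
    using p d by (intro exI[of _ "rev (snd p)"] exI[of _ "rev (snd d)"]) (auto simp: emb_right_def mem_Times_iff prod_eq_iff)
qed (simp_all add: emb_right_def mult_exp_def rev_addE)

context admissible_order
begin

lemma strict_total_order_on_ord_star_up: "strict_total_order_on (Ex n \<times> Ex n) (ord_star_up (strict le))"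
proof -
  have "strict_total_order_on (Ex n \<times> Ex n) (\<lambda>a b. strict le (rev (snd a)) (rev (snd b)) \<or>
      rev (snd a) = rev (snd b) \<and> strict le (fst a) (fst b))"
    by (rule strict_total_order_on_lex[OF strict_total_order_on_adm_less strict_total_order_on_adm_less])
      (auto simp: mem_Times_iff prod_eq_iff)
  then show ?thesis by (simp add: ord_star_up_def[abs_def])
qed

lemma strict_total_order_on_ord_star_low: "strict_total_order_on (Ex n \<times> Ex n) (ord_star_low (strict le))"
proof -
  have "strict_total_order_on (Ex n \<times> Ex n) (\<lambda>a b. strict le (fst a) (fst b) \<or>
      fst a = fst b \<and> strict le (rev (snd a)) (rev (snd b)))"
    by (rule strict_total_order_on_lex[OF strict_total_order_on_adm_less strict_total_order_on_adm_less])
      (auto simp: mem_Times_iff prod_eq_iff)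
  then show ?thesis by (simp add: ord_star_low_def[abs_def])
qed

lemma strict_total_order_on_ord_c_up: "strict_total_order_on (Ex n \<times> Ex n) (ord_c_up (strict le))"
proof -
  have "strict_total_order_on (Ex n \<times> Ex n) (\<lambda>a b. strict le (mult_exp a) (mult_exp b) \<or>
      mult_exp a = mult_exp b \<and> strict le (rev (snd a)) (rev (snd b)))"
  proof (rule strict_total_order_on_lex[OF strict_total_order_on_adm_less strict_total_order_on_adm_less])
    fix a b assume "a \<in> Ex n \<times> Ex n" "b \<in> Ex n \<times> Ex n" "mult_exp a = mult_exp b" "rev (snd a) = rev (snd b)"
    then show "a = b"
      using addE_right_cancel[of "fst a" "rev (snd a)" "fst b"] by (auto simp: mult_exp_def mem_Times_iff prod_eq_iff)
  qed (auto simp: mult_exp_def mem_Times_iff)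
  then show ?thesis by (simp add: ord_c_up_def[abs_def] mult_exp_def)
qed

lemma strict_total_order_on_ord_c_low: "strict_total_order_on (Ex n \<times> Ex n) (ord_c_low (strict le))"
proof -
  have "strict_total_order_on (Ex n \<times> Ex n) (\<lambda>a b. strict le (mult_exp a) (mult_exp b) \<or>
      mult_exp a = mult_exp b \<and> strict le (fst a) (fst b))"
  proof (rule strict_total_order_on_lex[OF strict_total_order_on_adm_less strict_total_order_on_adm_less])
    fix a b assume "a \<in> Ex n \<times> Ex n" "b \<in> Ex n \<times> Ex n" "mult_exp a = mult_exp b" "fst a = fst b"
    then show "a = b"
      using addE_left_cancel[of "rev (snd a)" "fst a" "rev (snd b)"] by (auto simp: mult_exp_def mem_Times_iff prod_eq_iff)
  qed (auto simp: mult_exp_def mem_Times_iff)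
  then show ?thesis by (simp add: ord_c_low_def[abs_def] mult_exp_def)
qed

lemma mult_exp_below_emb_left_star_up:
  "p \<in> Ex n \<times> Ex n \<Longrightarrow> length e = n \<Longrightarrow> ord_star_up (strict le) p (emb_left n e) \<or> p = emb_left n e \<Longrightarrow>
    le (mult_exp p) e \<and> (mult_exp p = e \<longrightarrow> p = emb_left n e)"
  using adm_not_less_zero[of "rev (snd p)"] adm_refl[of e]
  by (cases p) (auto simp: ord_star_up_def emb_left_def mult_exp_def strict_def mem_Times_iff)

lemma mult_exp_below_emb_left_c_up:
  "p \<in> Ex n \<times> Ex n \<Longrightarrow> length e = n \<Longrightarrow> ord_c_up (strict le) p (emb_left n e) \<or> p = emb_left n e \<Longrightarrow>
    le (mult_exp p) e \<and> (mult_exp p = e \<longrightarrow> p = emb_left n e)"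
  using adm_not_less_zero[of "rev (snd p)"] adm_refl[of e]
  by (cases p) (auto simp: ord_c_up_def emb_left_def mult_exp_def strict_def mem_Times_iff)

lemma mult_exp_below_emb_right_star_low:
  "p \<in> Ex n \<times> Ex n \<Longrightarrow> length e = n \<Longrightarrow> ord_star_low (strict le) p (emb_right n e) \<or> p = emb_right n e \<Longrightarrow>
    le (mult_exp p) e \<and> (mult_exp p = e \<longrightarrow> p = emb_right n e)"
  using adm_not_less_zero[of "fst p"] adm_refl[of e]
  by (cases p) (auto simp: ord_star_low_def emb_right_def mult_exp_def strict_def mem_Times_iff)

lemma mult_exp_below_emb_right_c_low:
  "p \<in> Ex n \<times> Ex n \<Longrightarrow> length e = n \<Longrightarrow> ord_c_low (strict le) p (emb_right n e) \<or> p = emb_right n e \<Longrightarrow>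
    le (mult_exp p) e \<and> (mult_exp p = e \<longrightarrow> p = emb_right n e)"
  using adm_not_less_zero[of "fst p"] adm_refl[of e]
  by (cases p) (auto simp: ord_c_low_def emb_right_def mult_exp_def strict_def mem_Times_iff)

end

section \<open>Leading exponents under the multiplication map\<close>

locale env_embedding = pbw_algebra sc x n le + exp_embedding n emb
  for sc :: "'k::field \<Rightarrow> 'r::ring_1" and x n le and emb +
  fixes envord :: "nat list \<times> nat list \<Rightarrow> nat list \<times> nat list \<Rightarrow> bool"
  assumes envord_total: "strict_total_order_on (Ex n \<times> Ex n) envord"
    and envord_emb_iff: "length a = n \<Longrightarrow> length b = n \<Longrightarrow> envord (emb a) (emb b) \<longleftrightarrow> strict le a b"
    and mult_exp_below_emb: "p \<in> Ex n \<times> Ex n \<Longrightarrow> length e = n \<Longrightarrow> envord p (emb e) \<or> p = emb e \<Longrightarrow>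
      le (mult_exp p) e \<and> (mult_exp p = e \<longrightarrow> p = emb e)"
begin

lemma modord_emb_iff:
  "length a = n \<Longrightarrow> length b = n \<Longrightarrow>
    modord istop envord (emb a, i) (emb b, j) \<longleftrightarrow> modord istop (strict le) (a, i) (b, j)"
  using envord_emb_iff emb_inj by (auto simp: modord_def TOP_def POT_def)

(* A section of m^s: the coefficient of x^e in f_i is placed at emb e. *)
definition lift :: "(nat \<Rightarrow> 'r) \<Rightarrow> nat \<Rightarrow> nat list \<times> nat list \<Rightarrow> 'k" where
  "lift f i p = (if p \<in> emb ` Ex n then cf sc x n (f i) (mult_exp p) else 0)"

lemma lift_emb: "length e = n \<Longrightarrow> lift f i (emb e) = cf sc x n (f i) e"
  by (simp add: lift_def mult_exp_emb)

lemma support_lift: "{p. lift f i p \<noteq> 0} = emb ` {e. cf sc x n (f i) e \<noteq> 0}"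
proof (intro set_eqI iffI)
  fix p assume "p \<in> {p. lift f i p \<noteq> 0}"
  then obtain e where "length e = n" "p = emb e" "cf sc x n (f i) e \<noteq> 0"
    by (auto simp: lift_def mult_exp_emb split: if_splits)
  then show "p \<in> emb ` {e. cf sc x n (f i) e \<noteq> 0}" by blast
next
  fix p assume "p \<in> emb ` {e. cf sc x n (f i) e \<noteq> 0}"
  then obtain e where "p = emb e" "cf sc x n (f i) e \<noteq> 0" by blast
  then show "p \<in> {p. lift f i p \<noteq> 0}" using lift_emb length_cf_support by auto
qed

lemma lift_in_envvecs:
  assumes "f \<in> vecs s"
  shows "lift f \<in> envvecs n s"
proof -
  have "finite {p. lift f i p \<noteq> 0}" for i
    unfolding support_lift using finite_cf_support by blast
  moreover have "length (fst p) = n \<and> length (snd p) = n" if nz: "lift f i p \<noteq> 0" for i p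
  proof -
    obtain e where "p = emb e" "length e = n"
      using nz support_lift length_cf_support by blast
    then show ?thesis using emb_in_Ex[of e] by (simp add: mem_Times_iff)
  qed
  moreover have "lift f i = (\<lambda>_. 0)" if "s \<le> i" for i
    using assms that by (simp add: vecs_def lift_def fun_eq_iff)
  ultimately show ?thesis unfolding envvecs_def envc_def by blast
qed

lemma ms_lift: "ms sc x n (lift f) = f"
proof
  fix i
  let ?S = "{e. cf sc x n (f i) e \<noteq> 0}"
  have "inj_on emb ?S"
  proof (rule inj_onI)
    fix a b assume "a \<in> ?S" "b \<in> ?S" "emb a = emb b"
    then show "a = b" using emb_inj[of a b] length_cf_support by simp
  qed
  then have "ms sc x n (lift f) i =
      (\<Sum>e\<in>?S. sc (lift f i (emb e)) * mon x n (fst (emb e)) * mon x n (rev (snd (emb e))))"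
    unfolding ms_def menv_def support_lift by (simp add: sum.reindex)
  also have "\<dots> = (\<Sum>e\<in>?S. sc (cf sc x n (f i) e) * mon x n e)"
  proof (rule sum.cong[OF refl])
    fix e assume "e \<in> ?S"
    then have "length e = n" using length_cf_support by blast
    then show "sc (lift f i (emb e)) * mon x n (fst (emb e)) * mon x n (rev (snd (emb e))) =
        sc (cf sc x n (f i) e) * mon x n e"
      by (simp add: lift_emb mon_emb mult.assoc)
  qed
  finally show "ms sc x n (lift f) i = f i"
    using lin_cf[of "f i"] by (simp add: lin_def)
qed

lemma supp_vec_lift: "supp_vec (\<lambda>c. c) s (lift f) = (\<lambda>(e, i). (emb e, i)) ` supp_vec (cf sc x n) s f"
proof (intro set_eqI iffI)
  fix z assume "z \<in> supp_vec (\<lambda>c. c) s (lift f)"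
  then obtain p i where "z = (p, i)" "i < s" "lift f i p \<noteq> 0" by (auto simp: supp_vec_def)
  moreover from this obtain e where "p = emb e" "cf sc x n (f i) e \<noteq> 0"
    using support_lift by blast
  ultimately show "z \<in> (\<lambda>(e, i). (emb e, i)) ` supp_vec (cf sc x n) s f"
    by (force simp: supp_vec_def)
next
  fix z assume "z \<in> (\<lambda>(e, i). (emb e, i)) ` supp_vec (cf sc x n) s f"
  then obtain e i where "z = (emb e, i)" "i < s" "cf sc x n (f i) e \<noteq> 0"
    by (auto simp: supp_vec_def)
  then show "z \<in> supp_vec (\<lambda>c. c) s (lift f)"
    using lift_emb length_cf_support by (auto simp: supp_vec_def)
qed

lemma expv_lift:
  assumes f: "f \<in> vecs s" "f \<noteq> (\<lambda>_. 0)" and ex: "expv (cf sc x n) (modord istop (strict le)) s f = (e, i)"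
  shows "expv (\<lambda>c. c) (modord istop envord) s (lift f) = (emb e, i)"
proof -
  note greatest = expv_greatest[OF strict_total_order_on_adm_less finite_supp_vec_cf
      supp_vec_cf_nonempty[OF f] supp_vec_cf_subset, where istop = istop, unfolded ex]
  show ?thesis
  proof (rule expv_eqI[OF envord_total supp_vec_env_subset[OF lift_in_envvecs[OF f(1)]]])
    show "(emb e, i) \<in> supp_vec (\<lambda>c. c) s (lift f)"
      unfolding supp_vec_lift using greatest(1) by force
    fix z assume "z \<in> supp_vec (\<lambda>c. c) s (lift f)" "z \<noteq> (emb e, i)"
    then obtain e' i' where z: "z = (emb e', i')" "(e', i') \<in> supp_vec (cf sc x n) s f" "(e', i') \<noteq> (e, i)"
      unfolding supp_vec_lift by auto
    moreover have "length e' = n" "length e = n"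
      using subsetD[OF supp_vec_cf_subset z(2)] subsetD[OF supp_vec_cf_subset greatest(1)] by auto
    ultimately show "modord istop envord z (emb e, i)"
      using greatest(2) modord_emb_iff by simp
  qed
qed

lemma lift_nonzero: "f \<noteq> (\<lambda>_. 0) \<Longrightarrow> lift f \<noteq> (\<lambda>_ _. 0)"
  using ms_lift[of f] by (auto simp: ms_def menv_def)

lemma cf_ms:
  "F \<in> envvecs n s \<Longrightarrow> cf sc x n (ms sc x n F j) \<gamma> =
    (\<Sum>p\<in>{p. F j p \<noteq> 0}. F j p * cf sc x n (mon x n (fst p) * mon x n (rev (snd p))) \<gamma>)"
  by (simp add: ms_def cf_menv[OF envvecs_envc])

lemma cf_mon_mult_mon_mult_exp:
  "cf sc x n (mon x n (fst p) * mon x n (rev (snd p))) \<gamma> \<noteq> 0 \<Longrightarrow> p \<in> Ex n \<times> Ex n \<Longrightarrow>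
    le \<gamma> (mult_exp p)"
  unfolding mult_exp_def by (rule cf_mon_mult_mon_le) (auto simp: mem_Times_iff)

lemma modord_le_of_below_emb:
  assumes p: "p \<in> Ex n \<times> Ex n" and e0: "length e0 = n" and \<gamma>: "length \<gamma> = n" "le \<gamma> (mult_exp p)"
    and below: "(p, j) = (emb e0, i0) \<or> modord istop envord (p, j) (emb e0, i0)"
  shows "(\<gamma>, j) = (e0, i0) \<or> modord istop (strict le) (\<gamma>, j) (e0, i0)"
proof -
  have mult_exp_len: "length (mult_exp p) = n" using p by (simp add: mult_exp_def mem_Times_iff)
  have le_e0: "le \<gamma> e0" and eq_e0: "\<gamma> = e0 \<Longrightarrow> p = emb e0" if "envord p (emb e0) \<or> p = emb e0"
    using mult_exp_below_emb[OF p e0 that] adm_trans[OF \<gamma>(1) mult_exp_len e0 \<gamma>(2)]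
      adm_antisym[OF mult_exp_len e0] \<gamma>(2) by auto
  have "\<not> envord (emb e0) (emb e0)" using envord_emb_iff[OF e0 e0] by (simp add: strict_def)
  then show ?thesis
    using below le_e0 eq_e0 by (cases istop) (auto simp: modord_def TOP_def POT_def strict_def)
qed

context
  fixes F :: "nat \<Rightarrow> nat list \<times> nat list \<Rightarrow> 'k" and s i0 :: nat and e0 :: "nat list" and istop :: bool
  assumes F: "F \<in> envvecs n s" and e0: "length e0 = n"
    and lead: "(emb e0, i0) \<in> supp_vec (\<lambda>c. c) s F"
      "\<And>z. z \<in> supp_vec (\<lambda>c. c) s F \<Longrightarrow> z \<noteq> (emb e0, i0) \<Longrightarrow> modord istop envord z (emb e0, i0)"
begin

lemma cf_ms_lead: "cf sc x n (ms sc x n F i0) e0 = F i0 (emb e0)"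
proof -
  let ?c = "\<lambda>p. F i0 p * cf sc x n (mon x n (fst p) * mon x n (rev (snd p))) e0"
  have "F i0 (emb e0) \<noteq> 0" and "i0 < s" using lead(1) by (auto simp: supp_vec_def)
  have "?c p = 0" if "p \<in> {p. F i0 p \<noteq> 0} - {emb e0}" for p
  proof (rule ccontr)
    assume "?c p \<noteq> 0"
    have pD: "p \<in> Ex n \<times> Ex n" using that envvecs_support[OF F] by blast
    then have len: "length (mult_exp p) = n" by (simp add: mult_exp_def mem_Times_iff)
    from \<open>?c p \<noteq> 0\<close> have "le e0 (mult_exp p)"
      using cf_mon_mult_mon_mult_exp[OF _ pD] by simp
    moreover have "modord istop envord (p, i0) (emb e0, i0)"
      using lead(2)[of "(p, i0)"] that \<open>i0 < s\<close> by (auto simp: supp_vec_def)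
    then have "envord p (emb e0)" by (auto simp: modord_def TOP_def POT_def split: if_splits)
    then have "le (mult_exp p) e0" "mult_exp p = e0 \<Longrightarrow> p = emb e0"
      using mult_exp_below_emb[OF pD e0] by blast+
    ultimately show False
      using adm_antisym[OF len e0] that by auto
  qed
  then have "cf sc x n (ms sc x n F i0) e0 = ?c (emb e0)"
    unfolding cf_ms[OF F] using \<open>F i0 (emb e0) \<noteq> 0\<close> envc_finite_support[OF envvecs_envc[OF F]]
    by (subst sum.remove[where x = "emb e0"]) auto
  also have "\<dots> = F i0 (emb e0)"
    using e0 by (simp add: mon_emb cf_mon)
  finally show ?thesis .
qed

lemma cf_ms_below_lead:
  assumes "cf sc x n (ms sc x n F j) \<gamma> \<noteq> 0"
  shows "(\<gamma>, j) = (e0, i0) \<or> modord istop (strict le) (\<gamma>, j) (e0, i0)"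
proof -
  obtain p where p: "F j p \<noteq> 0" "cf sc x n (mon x n (fst p) * mon x n (rev (snd p))) \<gamma> \<noteq> 0"
    using assms unfolding cf_ms[OF F] by (auto elim: sum.not_neutral_contains_not_neutral)
  have "j < s" using p(1) F by (cases "j < s") (auto simp: envvecs_def)
  then have "(p, j) = (emb e0, i0) \<or> modord istop envord (p, j) (emb e0, i0)"
    using lead(2)[of "(p, j)"] p(1) by (auto simp: supp_vec_def)
  moreover have "length \<gamma> = n" using assms length_cf_support by blast
  ultimately show ?thesis
    using modord_le_of_below_emb[OF envvecs_support[OF F p(1)] e0] cf_mon_mult_mon_mult_exp[OF p(2) envvecs_support[OF F p(1)]]
    by blast
qed

lemma expv_ms:
  shows "ms sc x n F \<noteq> (\<lambda>_. 0)" and "expv (cf sc x n) (modord istop (strict le)) s (ms sc x n F) = (e0, i0)"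
proof -
  have in_supp: "(e0, i0) \<in> supp_vec (cf sc x n) s (ms sc x n F)"
    using lead(1) cf_ms_lead by (simp add: supp_vec_def)
  then show "ms sc x n F \<noteq> (\<lambda>_. 0)" by (auto simp: supp_vec_def)
  show "expv (cf sc x n) (modord istop (strict le)) s (ms sc x n F) = (e0, i0)"
    using in_supp cf_ms_below_lead
    by (intro expv_eqI[OF strict_total_order_on_adm_less supp_vec_cf_subset]) (auto simp: supp_vec_def)
qed

end

lemma expv_env_greatest:
  assumes "F \<in> envvecs n s" "F \<noteq> (\<lambda>_ _. 0)"
  shows "expv (\<lambda>c. c) (modord istop envord) s F \<in> supp_vec (\<lambda>c. c) s F"
    "\<And>z. z \<in> supp_vec (\<lambda>c. c) s F \<Longrightarrow> z \<noteq> expv (\<lambda>c. c) (modord istop envord) s F \<Longrightarrow>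
      modord istop envord z (expv (\<lambda>c. c) (modord istop envord) s F)"
  by (rule expv_greatest[OF envord_total finite_supp_vec_env[OF assms(1)]
      supp_vec_env_nonempty[OF assms] supp_vec_env_subset[OF assms(1)]])+

lemma expv_ms_of_expv_emb:
  assumes "F \<in> envvecs n s" "F \<noteq> (\<lambda>_ _. 0)" "length e0 = n"
    and "expv (\<lambda>c. c) (modord istop envord) s F = (emb e0, i0)"
  shows "ms sc x n F \<noteq> (\<lambda>_. 0)" "expv (cf sc x n) (modord istop (strict le)) s (ms sc x n F) = (e0, i0)"
  using expv_ms[OF assms(1,3)] expv_env_greatest[OF assms(1,2), where istop = istop, unfolded assms(4)]
  by blast+

section \<open>Two-sided Groebner bases from left Groebner bases\<close>

context
  fixes s :: nat and M :: "(nat \<Rightarrow> 'r) set" and G and istop :: bool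
  assumes M: "subbimodule s M"
    and G: "left_gb sc x n s (modord istop envord) (NM sc x n s M) G"
begin

lemma finite_G: "finite G"
  and G_subset: "G \<subseteq> NM sc x n s M - {\<lambda>_ _. 0}"
  and NM_eq_lspan: "NM sc x n s M = lspan sc x n G"
  and ExpSet_NM: "ExpSet (\<lambda>c. c) (modord istop envord) s (\<lambda>_ _. 0) (NM sc x n s M) =
    (\<Union>g\<in>G. cone addE2 (Ex n \<times> Ex n) (expv (\<lambda>c. c) (modord istop envord) s g))"
  using G unfolding left_gb_def by blast+

lemma M_vecs: "M \<subseteq> vecs s"
  using M by (simp add: subbimodule_def)

lemma lift_in_NM: "f \<in> M \<Longrightarrow> lift f \<in> NM sc x n s M"
  using M_vecs by (auto simp: NM_def ms_lift intro: lift_in_envvecs)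

lemma G_memD: "g \<in> G \<Longrightarrow> g \<in> envvecs n s \<and> g \<noteq> (\<lambda>_ _. 0) \<and> ms sc x n g \<in> M"
  using G_subset by (auto simp: NM_def)

lemma bispan_ms_image: "M = bispan (ms sc x n ` G - {\<lambda>_. 0})"
proof
  show "bispan (ms sc x n ` G - {\<lambda>_. 0}) \<subseteq> M"
    using G_memD by (intro bispan_subset[OF M]) auto
  show "M \<subseteq> bispan (ms sc x n ` G - {\<lambda>_. 0})"
  proof
    fix f assume "f \<in> M"
    then have "lift f \<in> lspan sc x n G" using lift_in_NM NM_eq_lspan by simp
    then have "ms sc x n (lift f) \<in> bispan (ms sc x n ` G - {\<lambda>_. 0})"
      using G_memD by (intro ms_lspan_in_bispan[OF finite_G]) auto
    then show "f \<in> bispan (ms sc x n ` G - {\<lambda>_. 0})" by (simp add: ms_lift)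
  qed
qed

lemma emb_in_ExpSet_NM_iff:
  assumes "length e = n"
  shows "(emb e, i) \<in> ExpSet (\<lambda>c. c) (modord istop envord) s (\<lambda>_ _. 0) (NM sc x n s M) \<longleftrightarrow>
    (\<exists>g\<in>G. \<exists>e0 \<gamma>. length e0 = n \<and> length \<gamma> = n \<and>
      expv (\<lambda>c. c) (modord istop envord) s g = (emb e0, i) \<and> e = addE e0 \<gamma>)"
proof
  assume "(emb e, i) \<in> ExpSet (\<lambda>c. c) (modord istop envord) s (\<lambda>_ _. 0) (NM sc x n s M)"
  then obtain g \<delta> where g: "g \<in> G" "\<delta> \<in> Ex n \<times> Ex n"
    and expv_g: "emb e = addE2 (fst (expv (\<lambda>c. c) (modord istop envord) s g)) \<delta>"
      "i = snd (expv (\<lambda>c. c) (modord istop envord) s g)"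
    unfolding ExpSet_NM cone_def by auto
  have "g \<in> envvecs n s" "g \<noteq> (\<lambda>_ _. 0)" using G_memD[OF g(1)] by auto
  then have "expv (\<lambda>c. c) (modord istop envord) s g \<in> (Ex n \<times> Ex n) \<times> UNIV"
    using expv_env_greatest(1) supp_vec_env_subset by blast
  then have fst_in: "fst (expv (\<lambda>c. c) (modord istop envord) s g) \<in> Ex n \<times> Ex n"
    by (auto simp: mem_Times_iff)
  obtain e0 \<gamma> where "length e0 = n" "length \<gamma> = n" "e = addE e0 \<gamma>"
    "fst (expv (\<lambda>c. c) (modord istop envord) s g) = emb e0"
    using emb_eq_addE2[OF fst_in g(2) expv_g(1)] by blast
  with g(1) expv_g(2) show "\<exists>g\<in>G. \<exists>e0 \<gamma>. length e0 = n \<and> length \<gamma> = n \<and>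
      expv (\<lambda>c. c) (modord istop envord) s g = (emb e0, i) \<and> e = addE e0 \<gamma>"
    by (metis prod.collapse)
next
  assume "\<exists>g\<in>G. \<exists>e0 \<gamma>. length e0 = n \<and> length \<gamma> = n \<and>
    expv (\<lambda>c. c) (modord istop envord) s g = (emb e0, i) \<and> e = addE e0 \<gamma>"
  then obtain g e0 \<gamma> where g: "g \<in> G" "length e0 = n" "length \<gamma> = n"
    "expv (\<lambda>c. c) (modord istop envord) s g = (emb e0, i)" "e = addE e0 \<gamma>"
    by blast
  have "(addE2 (emb e0) (emb \<gamma>), i) \<in> cone addE2 (Ex n \<times> Ex n) (emb e0, i)"
    using cone_memI[OF emb_in_Ex[OF g(3)], of addE2 "(emb e0, i)"] by simp
  then have "(emb e, i) \<in> cone addE2 (Ex n \<times> Ex n) (expv (\<lambda>c. c) (modord istop envord) s g)"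
    using g by (simp add: addE2_emb)
  with \<open>g \<in> G\<close> show "(emb e, i) \<in> ExpSet (\<lambda>c. c) (modord istop envord) s (\<lambda>_ _. 0) (NM sc x n s M)"
    unfolding ExpSet_NM by blast
qed

lemma ExpSet_M_subset: "ExpSet (cf sc x n) (modord istop (strict le)) s (\<lambda>_. 0) M \<subseteq> Ex n \<times> UNIV"
proof
  fix z assume "z \<in> ExpSet (cf sc x n) (modord istop (strict le)) s (\<lambda>_. 0) M"
  then obtain f where "f \<in> M" "f \<noteq> (\<lambda>_. 0)" "z = expv (cf sc x n) (modord istop (strict le)) s f"
    unfolding ExpSet_def by blast
  then show "z \<in> Ex n \<times> UNIV"
    using expv_greatest(1)[OF strict_total_order_on_adm_less finite_supp_vec_cf
        supp_vec_cf_nonempty supp_vec_cf_subset] M_vecs supp_vec_cf_subset by blast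
qed

lemma in_ExpSet_M_iff:
  assumes "length e = n"
  shows "(e, i) \<in> ExpSet (cf sc x n) (modord istop (strict le)) s (\<lambda>_. 0) M \<longleftrightarrow>
    (emb e, i) \<in> ExpSet (\<lambda>c. c) (modord istop envord) s (\<lambda>_ _. 0) (NM sc x n s M)"
proof
  assume "(e, i) \<in> ExpSet (cf sc x n) (modord istop (strict le)) s (\<lambda>_. 0) M"
  then obtain f where "f \<in> M" "f \<noteq> (\<lambda>_. 0)" "expv (cf sc x n) (modord istop (strict le)) s f = (e, i)"
    unfolding ExpSet_def by auto
  then have "lift f \<in> NM sc x n s M" "lift f \<noteq> (\<lambda>_ _. 0)"
    "expv (\<lambda>c. c) (modord istop envord) s (lift f) = (emb e, i)"
    using lift_in_NM lift_nonzero expv_lift M_vecs by blast+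
  then show "(emb e, i) \<in> ExpSet (\<lambda>c. c) (modord istop envord) s (\<lambda>_ _. 0) (NM sc x n s M)"
    unfolding ExpSet_def by force
next
  assume "(emb e, i) \<in> ExpSet (\<lambda>c. c) (modord istop envord) s (\<lambda>_ _. 0) (NM sc x n s M)"
  then obtain F where F: "F \<in> NM sc x n s M" "F \<noteq> (\<lambda>_ _. 0)"
    "expv (\<lambda>c. c) (modord istop envord) s F = (emb e, i)"
    unfolding ExpSet_def by auto
  then have "F \<in> envvecs n s" "ms sc x n F \<in> M" by (simp_all add: NM_def)
  moreover from this F assms have "ms sc x n F \<noteq> (\<lambda>_. 0)"
    "expv (cf sc x n) (modord istop (strict le)) s (ms sc x n F) = (e, i)"
    using expv_ms_of_expv_emb by blast+
  ultimately show "(e, i) \<in> ExpSet (cf sc x n) (modord istop (strict le)) s (\<lambda>_. 0) M"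
    unfolding ExpSet_def by force
qed

lemma ExpSet_ms_image:
  "ExpSet (cf sc x n) (modord istop (strict le)) s (\<lambda>_. 0) M =
    (\<Union>g\<in>ms sc x n ` G - {\<lambda>_. 0}. cone addE (Ex n) (expv (cf sc x n) (modord istop (strict le)) s g))"
  (is "?E = ?C")
proof (intro set_eqI iffI)
  fix z assume "z \<in> ?E"
  moreover obtain e i where z: "z = (e, i)" by (cases z)
  ultimately have e: "length e = n" "(e, i) \<in> ?E" using ExpSet_M_subset by auto
  then obtain g e0 \<gamma> where g: "g \<in> G" "length e0 = n" "length \<gamma> = n"
    "expv (\<lambda>c. c) (modord istop envord) s g = (emb e0, i)" "e = addE e0 \<gamma>"
    using in_ExpSet_M_iff emb_in_ExpSet_NM_iff by blast
  then have "ms sc x n g \<noteq> (\<lambda>_. 0)" "expv (cf sc x n) (modord istop (strict le)) s (ms sc x n g) = (e0, i)"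
    using G_memD expv_ms_of_expv_emb by blast+
  moreover have "(addE e0 \<gamma>, i) \<in> cone addE (Ex n) (e0, i)"
    using cone_memI[of \<gamma> "Ex n" addE "(e0, i)"] g(3) by simp
  ultimately show "z \<in> ?C" using g(1,5) z by (intro UN_I[of "ms sc x n g"]) auto
next
  fix z assume "z \<in> ?C"
  then obtain g \<gamma> where g: "g \<in> G" "ms sc x n g \<noteq> (\<lambda>_. 0)" "length \<gamma> = n"
    and z: "z = (addE (fst (expv (cf sc x n) (modord istop (strict le)) s (ms sc x n g))) \<gamma>,
      snd (expv (cf sc x n) (modord istop (strict le)) s (ms sc x n g)))"
    unfolding cone_def by auto
  obtain e i where ei: "expv (cf sc x n) (modord istop (strict le)) s (ms sc x n g) = (e, i)"
    by (cases "expv (cf sc x n) (modord istop (strict le)) s (ms sc x n g)")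
  have "(e, i) \<in> ?E"
    using G_memD[OF g(1)] g(2) ei unfolding ExpSet_def by force
  moreover from this have e: "length e = n" using ExpSet_M_subset by auto
  ultimately obtain g' e0 \<gamma>0 where "g' \<in> G" "length e0 = n" "length \<gamma>0 = n"
    "expv (\<lambda>c. c) (modord istop envord) s g' = (emb e0, i)" "e = addE e0 \<gamma>0"
    using in_ExpSet_M_iff emb_in_ExpSet_NM_iff by blast
  \<comment> \<open>Exp(M) inherits closure under cones from Exp(N_M).\<close>
  then have "(emb (addE e \<gamma>), i) \<in> ExpSet (\<lambda>c. c) (modord istop envord) s (\<lambda>_ _. 0) (NM sc x n s M)"
    using e g(3) emb_in_ExpSet_NM_iff[of "addE e \<gamma>" i]
    by (metis addE_assoc length_addE min.idem)
  then show "z \<in> ?E"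
    using in_ExpSet_M_iff e g(3) z ei by simp
qed

theorem two_sided_gb_ms_image: "two_sided_gb sc x n s (modord istop (strict le)) M (ms sc x n ` G - {\<lambda>_. 0})"
  unfolding two_sided_gb_def using finite_G G_memD bispan_ms_image ExpSet_ms_image by auto

end

end

lemma pbw_algebra_of_pbw:
  assumes "pbw sc x n le"
  shows "pbw_algebra sc x n le"
proof (rule pbw_algebra.intro)
  show "admissible_order n le"
    using assms unfolding pbw_def by (elim conjE) (rule admissible_order_of_admissible)
  show "pbw_algebra_axioms sc x n le" using assms by (rule pbw_algebra_axioms.intro)
qed

lemma env_embedding_star_up:
  assumes "pbw sc x n le"
  shows "env_embedding sc x n le (emb_left n) (ord_star_up (strict le))"
proof -
  interpret pbw_algebra sc x n le using assms by (rule pbw_algebra_of_pbw)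
  show ?thesis
  proof (intro env_embedding.intro env_embedding_axioms.intro)
    show "pbw_algebra sc x n le" using assms by (rule pbw_algebra_of_pbw)
    show "exp_embedding n (emb_left n)" by (rule exp_embedding_emb_left)
    show "strict_total_order_on (Ex n \<times> Ex n) (ord_star_up (strict le))"
      by (rule strict_total_order_on_ord_star_up)
    show "ord_star_up (strict le) (emb_left n a) (emb_left n b) \<longleftrightarrow> strict le a b"
      if "length a = n" "length b = n" for a b
      using that by (simp add: ord_star_up_def emb_left_def strict_def)
  qed (fact mult_exp_below_emb_left_star_up)
qed

lemma env_embedding_c_up:
  assumes "pbw sc x n le"
  shows "env_embedding sc x n le (emb_left n) (ord_c_up (strict le))"
proof -
  interpret pbw_algebra sc x n le using assms by (rule pbw_algebra_of_pbw)
  show ?thesis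
  proof (intro env_embedding.intro env_embedding_axioms.intro)
    show "pbw_algebra sc x n le" using assms by (rule pbw_algebra_of_pbw)
    show "exp_embedding n (emb_left n)" by (rule exp_embedding_emb_left)
    show "strict_total_order_on (Ex n \<times> Ex n) (ord_c_up (strict le))"
      by (rule strict_total_order_on_ord_c_up)
    show "ord_c_up (strict le) (emb_left n a) (emb_left n b) \<longleftrightarrow> strict le a b"
      if "length a = n" "length b = n" for a b
      using that by (simp add: ord_c_up_def emb_left_def strict_def)
  qed (fact mult_exp_below_emb_left_c_up)
qed

lemma env_embedding_star_low:
  assumes "pbw sc x n le"
  shows "env_embedding sc x n le (emb_right n) (ord_star_low (strict le))"
proof -
  interpret pbw_algebra sc x n le using assms by (rule pbw_algebra_of_pbw)
  show ?thesis
  proof (intro env_embedding.intro env_embedding_axioms.intro)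
    show "pbw_algebra sc x n le" using assms by (rule pbw_algebra_of_pbw)
    show "exp_embedding n (emb_right n)" by (rule exp_embedding_emb_right)
    show "strict_total_order_on (Ex n \<times> Ex n) (ord_star_low (strict le))"
      by (rule strict_total_order_on_ord_star_low)
    show "ord_star_low (strict le) (emb_right n a) (emb_right n b) \<longleftrightarrow> strict le a b"
      if "length a = n" "length b = n" for a b
      using that by (simp add: ord_star_low_def emb_right_def strict_def)
  qed (fact mult_exp_below_emb_right_star_low)
qed

lemma env_embedding_c_low:
  assumes "pbw sc x n le"
  shows "env_embedding sc x n le (emb_right n) (ord_c_low (strict le))"
proof -
  interpret pbw_algebra sc x n le using assms by (rule pbw_algebra_of_pbw)
  show ?thesis
  proof (intro env_embedding.intro env_embedding_axioms.intro)
    show "pbw_algebra sc x n le" using assms by (rule pbw_algebra_of_pbw)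
    show "exp_embedding n (emb_right n)" by (rule exp_embedding_emb_right)
    show "strict_total_order_on (Ex n \<times> Ex n) (ord_c_low (strict le))"
      by (rule strict_total_order_on_ord_c_low)
    show "ord_c_low (strict le) (emb_right n a) (emb_right n b) \<longleftrightarrow> strict le a b"
      if "length a = n" "length b = n" for a b
      using that by (simp add: ord_c_low_def emb_right_def strict_def)
  qed (fact mult_exp_below_emb_right_c_low)
qed

theorem mainTheorem6:
  fixes sc :: "'k::field \<Rightarrow> 'r::ring_1" and x :: "nat \<Rightarrow> 'r" and n s :: nat
    and le :: "nat list \<Rightarrow> nat list \<Rightarrow> bool"
    and M :: "(nat \<Rightarrow> 'r) set"
    and G :: "(nat \<Rightarrow> (nat list \<times> nat list \<Rightarrow> 'k)) set"
    and envord :: "nat list \<times> nat list \<Rightarrow> nat list \<times> nat list \<Rightarrow> bool"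
    and istop :: bool
  assumes "pbw sc x n le"
    and "subbimodule s M"
    and "envord \<in> {ord_star_up (strict le), ord_c_up (strict le),
                   ord_star_low (strict le), ord_c_low (strict le)}"
    and "left_gb sc x n s (modord istop envord) (NM sc x n s M) G"
  shows "two_sided_gb sc x n s (modord istop (strict le)) M (ms sc x n ` G - {\<lambda>_. 0})"
proof -
  have "env_embedding sc x n le (emb_left n) envord \<or> env_embedding sc x n le (emb_right n) envord"
    using assms(3) env_embedding_star_up[OF assms(1)] env_embedding_c_up[OF assms(1)]
      env_embedding_star_low[OF assms(1)] env_embedding_c_low[OF assms(1)] by auto
  then show ?thesis
    using env_embedding.two_sided_gb_ms_image assms(2,4) by blast
qed

end
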